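(* (i) For $N=1$ (solid ball of radius $r_1$), for all sufficiently small $\delta>0$ the equation $\det\mathbf{A}_1(\omega,\delta)=0$ has a root $\omega_{1,1}(\delta)$ with positive real part, depending continuously on $\delta$, with $$\omega_{1,1}(\delta)=\frac{\sqrt3\,v_{\mathrm r}}{r_1}\delta^{1/2}-\mathrm{i}\frac{3v_{\mathrm r}}{2\tau r_1}\delta+O(\delta^{3/2}).$$ (ii) For $N=2$ (spherical shell $r_2<|x|\le r_1$ as resonator, $r_1>r_2>0$), for all sufficiently small $\delta>0$ the equation $\det\mathbf{A}_2(\omega,\delta)=0$ has a root $\omega_{2,1}(\delta)$ with positive real part, depending continuously on $\delta$, with $$\omega_{2,1}(\delta)=\frac{\sqrt{3r_1}\,v_{\mathrm r}}{\sqrt{r_1^3-r_2^3}}\delta^{1/2}-\mathrm{i}\frac{3r_1^2v_{\mathrm r}}{2\tau(r_1^3-r_2^3)}\delta+O(\delta^{3/2}).$$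
   Context: Concentric balls: radii $r_1>r_2>\dots>r_N>0$, $D_0=\{|x|>r_1\}$, $D_j=\{r_{j+1}<|x|\le r_j\}$ ($1\le j\le N-1$), $D_N=\{|x|\le r_N\}$. Odd layers are resonators with density/bulk modulus $\rho_{\mathrm r},\kappa_{\mathrm r}$; even layers (including $D_0$) have $\rho,\kappa$. $v_{\mathrm r}=\sqrt{\kappa_{\mathrm r}/\rho_{\mathrm r}}$, $v=\sqrt{\kappa/\rho}$ are fixed positive constants, $k_{\mathrm r}=\omega/v_{\mathrm r}$, $k=\omega/v$, $\delta=\rho_{\mathrm r}/\rho$, $\tau=v/v_{\mathrm r}$. Let $j(t)=j_0(t)=\sin t/t$ and $h(t)=h^{(1)}_0(t)=-\mathrm{i}e^{\mathrm{i}t}/t$ (spherical Bessel/Hankel functions of order 0), with $'$ denoting $d/dt$. The monopolar ($n=0$) transmission matrix $\mathbf{A}_N(\omega,\delta)$ is the $2N\times2N$ block tridiagonal matrix (unknowns $(a_1,b_1,\dots,a_N,b_N)$) with $2\times2$ diagonal blocks $M_i$ ($1\le i\le N$), superdiagonal blocks $R_i$ ($1\le i\le N-1$) and subdiagonal blocks $L_i$ ($2\le i\le N$), where for $i$ odd: $M_i=\begin{pmatrix}-h(kr_i)&j(k_{\mathrm r}r_i)\\-\delta h'(kr_i)&\tau j'(k_{\mathrm r}r_i)\end{pmatrix}$, $R_i=\begin{pmatrix}h(k_{\mathrm r}r_i)&0\\ \tau h'(k_{\mathrm r}r_i)&0\end{pmatrix}$, $L_i=\begin{pmatrix}0&-j(kr_i)\\0&-\delta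 j'(kr_i)\end{pmatrix}$; for $i$ even: $M_i=\begin{pmatrix}-h(k_{\mathrm r}r_i)&j(kr_i)\\-\tau h'(k_{\mathrm r}r_i)&\delta j'(kr_i)\end{pmatrix}$, $R_i=\begin{pmatrix}h(kr_i)&0\\ \delta h'(kr_i)&0\end{pmatrix}$, $L_i=\begin{pmatrix}0&-j(k_{\mathrm r}r_i)\\0&-\tau j'(k_{\mathrm r}r_i)\end{pmatrix}$. Roots $\omega$ of $\det\mathbf{A}_N(\omega,\delta)=0$ with $\omega\to0$ as $\delta\to0$ are the monopolar subwavelength resonant frequencies. *)

theory Defs
  imports Complex_Main "HOL-Analysis.Derivative" "HOL-Library.Landau_Symbols" "Jordan_Normal_Form.Determinant"
begin

definition sph_j :: "complex \<Rightarrow> complex" where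
  "sph_j t = sin t / t"

definition sph_h :: "complex \<Rightarrow> complex" where
  "sph_h t = - \<i> * exp (\<i> * t) / t"

text \<open>Entries (a,b) in {0,1}x{0,1} of the 2x2 blocks of layer interface i.
  ko, co: wavenumber and coefficient outside the interface r_i;
  ki, ci: wavenumber and coefficient inside.\<close>
definition blockM :: "complex \<Rightarrow> complex \<Rightarrow> complex \<Rightarrow> complex \<Rightarrow> real \<Rightarrow> nat \<Rightarrow> nat \<Rightarrow> complex" where
  "blockM ko co ki ci r a b =
     (if a = 0 then (if b = 0 then - sph_h (ko * r) else sph_j (ki * r))
      else (if b = 0 then - co * deriv sph_h (ko * r) else ci * deriv sph_j (ki * r)))"

definition blockR :: "complex \<Rightarrow> complex \<Rightarrow> complex \<Rightarrow> complex \<Rightarrow> real \<Rightarrow> nat \<Rightarrow> nat \<Rightarrow> complex" where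
  "blockR ko co ki ci r a b =
     (if b = 0 then (if a = 0 then sph_h (ki * r) else ci * deriv sph_h (ki * r)) else 0)"

definition blockL :: "complex \<Rightarrow> complex \<Rightarrow> complex \<Rightarrow> complex \<Rightarrow> real \<Rightarrow> nat \<Rightarrow> nat \<Rightarrow> complex" where
  "blockL ko co ki ci r a b =
     (if b = 1 then (if a = 0 then - sph_j (ko * r) else - co * deriv sph_j (ko * r)) else 0)"

text \<open>Monopolar transmission matrix A_N(omega, delta), size 2N x 2N, with
  radii r 1 > ... > r N, speeds v (background) and vr (resonator).\<close>
definition transmission_matrix ::
  "nat \<Rightarrow> (nat \<Rightarrow> real) \<Rightarrow> real \<Rightarrow> real \<Rightarrow> complex \<Rightarrow> real \<Rightarrow> complex mat" where
  "transmission_matrix N r v vr \<omega> \<delta> =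
     (let k = \<omega> / of_real v; kr = \<omega> / of_real vr;
          \<tau> = complex_of_real (v / vr); d = complex_of_real \<delta> in
      mat (2*N) (2*N) (\<lambda>(p, q).
        let i = p div 2 + 1; l = q div 2 + 1; a = p mod 2; b = q mod 2;
            ko = (if odd i then k else kr); co = (if odd i then d else \<tau>);
            ki = (if odd i then kr else k); ci = (if odd i then \<tau> else d) in
        if l = i then blockM ko co ki ci (r i) a b
        else if l = i + 1 then blockR ko co ki ci (r i) a b
        else if i = l + 1 then blockL ko co ki ci (r i) a b
        else 0))"

end

theory Submission
  imports Defs "HOL-Complex_Analysis.Complex_Analysis"
begin

text \<open>Put \<open>\<omega> = \<epsilon> w\<close> and \<open>\<delta> = \<epsilon>\<^sup>2\<close>. Up to a nonvanishing factor, \<open>det A\<^sub>N(\<epsilon> w, \<epsilon>\<^sup>2)\<close> is a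
  function \<open>F(w, \<epsilon>)\<close>, holomorphic in \<open>w \<noteq> 0\<close>, which the Taylor expansions of \<open>sin\<close> and
  \<open>cos\<close> show to be \<open>\<alpha> w\<^sup>2 + \<i> \<epsilon> \<beta> w - 1 + O(\<epsilon>\<^sup>2)\<close> uniformly near the root
  \<open>c = \<alpha>\<^sup>-\<^sup>1\<^sup>/\<^sup>2\<close> of the limiting quadratic. For small \<open>\<epsilon>\<close> the chord map
  \<open>w \<mapsto> w - F(w, \<epsilon>) / (2 \<alpha> c)\<close> contracts a disc around \<open>c\<close>, so its fixed point is a root
  \<open>W(\<epsilon>)\<close> depending continuously on \<open>\<epsilon>\<close>, and factoring the quadratic gives
  \<open>W(\<epsilon>) = c - \<i> \<epsilon> \<beta> / (2 \<alpha>) + O(\<epsilon>\<^sup>2)\<close>. The resonance is \<open>\<omega>(\<delta>) = \<surd>\<delta> W(\<surd>\<delta>)\<close>, with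
  \<open>\<alpha> = r\<^sub>1\<^sup>2 / (3 v\<^sub>r\<^sup>2)\<close> for the ball and \<open>\<alpha> = (r\<^sub>1\<^sup>3 - r\<^sub>2\<^sup>3) / (3 r\<^sub>1 v\<^sub>r\<^sup>2)\<close> for the shell,
  and \<open>\<beta> = r\<^sub>1 / v\<close> in both cases.\<close>

hide_const (open) Determinants.det

section \<open>Taylor estimates\<close>

definition exp_tail :: "nat \<Rightarrow> complex \<Rightarrow> complex" where
  "exp_tail n u = exp u - (\<Sum>k<n. u ^ k / fact k)"

lemma norm_exp_tail_le:
  assumes "norm u \<le> 1"
  shows "norm (exp_tail n u) \<le> 3 * norm u ^ n"
proof -
  have exp3: "exp (norm u) \<le> 3"
    using assms exp_le by (meson exp_le_cancel_iff order_trans)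
  show ?thesis
  proof (cases n)
    case 0
    have "norm (exp u) \<le> 3"
      using norm_exp[of u] exp3 by linarith
    then show ?thesis
      using 0 by (simp add: exp_tail_def)
  next
    case (Suc m)
    have "norm (exp_tail n u) \<le> exp (norm u) * norm u ^ n / fact m"
      using Taylor_exp_field[of u m] by (simp add: exp_tail_def Suc lessThan_Suc_atMost)
    also have "\<dots> \<le> exp (norm u) * norm u ^ n"
      by (auto simp: divide_le_eq fact_ge_1 mult_le_cancel_left1 mult_less_0_iff)
    also have "\<dots> \<le> 3 * norm u ^ n"
      using exp3 by (intro mult_right_mono) auto
    finally show ?thesis .
  qed
qed

lemma norm_exp_tail_sym_le:
  assumes "norm (z::complex) \<le> 1"
  shows "norm ((exp_tail n (\<i> * z) - exp_tail n (- (\<i> * z))) / (2 * \<i>)) \<le> 3 * norm z ^ n"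
    and "norm ((exp_tail n (\<i> * z) + exp_tail n (- (\<i> * z))) / 2) \<le> 3 * norm z ^ n"
proof -
  have "norm (exp_tail n (\<i> * z)) \<le> 3 * norm z ^ n" "norm (exp_tail n (- (\<i> * z))) \<le> 3 * norm z ^ n"
    using norm_exp_tail_le[of "\<i> * z" n] norm_exp_tail_le[of "- (\<i> * z)" n] assms
    by (simp_all add: norm_mult)
  then show "norm ((exp_tail n (\<i> * z) - exp_tail n (- (\<i> * z))) / (2 * \<i>)) \<le> 3 * norm z ^ n"
    and "norm ((exp_tail n (\<i> * z) + exp_tail n (- (\<i> * z))) / 2) \<le> 3 * norm z ^ n"
    using norm_triangle_ineq4[of "exp_tail n (\<i> * z)" "exp_tail n (- (\<i> * z))"]
      norm_triangle_ineq[of "exp_tail n (\<i> * z)" "exp_tail n (- (\<i> * z))"]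
    by (simp_all add: norm_divide norm_mult)
qed

lemma norm_sin_le:
  assumes "norm (z::complex) \<le> 1"
  shows "norm (sin z) \<le> 3 * norm z"
proof -
  have eq: "sin z = (exp_tail 1 (\<i> * z) - exp_tail 1 (- (\<i> * z))) / (2 * \<i>)"
    by (simp add: exp_tail_def sin_exp_eq eval_nat_numeral field_simps)
  show ?thesis
    unfolding eq using norm_exp_tail_sym_le(1)[OF assms, of 1] by simp
qed

lemma norm_sin_minus_id_le:
  assumes "norm (z::complex) \<le> 1"
  shows "norm (sin z - z) \<le> 3 * norm z ^ 3"
proof -
  have eq: "sin z - z = (exp_tail 3 (\<i> * z) - exp_tail 3 (- (\<i> * z))) / (2 * \<i>)"
    by (simp add: exp_tail_def sin_exp_eq eval_nat_numeral field_simps)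
  show ?thesis
    unfolding eq by (rule norm_exp_tail_sym_le(1)[OF assms])
qed

lemma norm_cos_minus_one_le:
  assumes "norm (z::complex) \<le> 1"
  shows "norm (cos z - 1) \<le> 3 * norm z ^ 2"
proof -
  have eq: "cos z - 1 = (exp_tail 2 (\<i> * z) + exp_tail 2 (- (\<i> * z))) / 2"
    by (simp add: exp_tail_def cos_exp_eq eval_nat_numeral field_simps)
  show ?thesis
    unfolding eq by (rule norm_exp_tail_sym_le(2)[OF assms])
qed

lemma norm_cos_le_4: "norm (z::complex) \<le> 1 \<Longrightarrow> norm (cos z) \<le> 4"
  using norm_cos_minus_one_le[of z] norm_triangle_sub[of "cos z" 1] power_le_one[of "norm z" 2]
  by simp

lemma norm_sin_minus_z_cos_le:
  assumes "norm (z::complex) \<le> 1"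
  shows "norm (sin z - z * cos z - z ^ 3 / 3) \<le> 6 * norm z ^ 5"
proof -
  define S where "S = (exp_tail 5 (\<i> * z) - exp_tail 5 (- (\<i> * z))) / (2 * \<i>)"
  define C where "C = (exp_tail 4 (\<i> * z) + exp_tail 4 (- (\<i> * z))) / 2"
  have "sin z - z * cos z - z ^ 3 / 3 = S - z * C"
    by (simp add: S_def C_def exp_tail_def sin_exp_eq cos_exp_eq eval_nat_numeral field_simps)
  also have "norm \<dots> \<le> norm S + norm z * norm C"
    using norm_triangle_ineq4[of S "z * C"] by (simp add: norm_mult)
  also have "\<dots> \<le> 3 * norm z ^ 5 + norm z * (3 * norm z ^ 4)"
    using norm_exp_tail_sym_le[OF assms, of 5] norm_exp_tail_sym_le[OF assms, of 4]
    unfolding S_def C_def by (intro add_mono mult_left_mono) auto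
  finally show ?thesis by (simp add: eval_nat_numeral)
qed

definition j1_over_z :: "complex \<Rightarrow> complex" where
  "j1_over_z z = (sin z - z * cos z) / z ^ 3"

definition cos_plus_z_sin :: "complex \<Rightarrow> complex" where
  "cos_plus_z_sin z = cos z + z * sin z"

lemma norm_j1_over_z_minus_third_le:
  assumes "z \<noteq> 0" "norm z \<le> 1"
  shows "norm (j1_over_z z - 1/3) \<le> 6 * norm z ^ 2"
proof -
  have "j1_over_z z - 1/3 = (sin z - z * cos z - z ^ 3 / 3) / z ^ 3"
    using assms by (simp add: j1_over_z_def field_simps)
  then have "norm (j1_over_z z - 1/3) = norm (sin z - z * cos z - z ^ 3 / 3) / norm z ^ 3"
    by (simp add: norm_divide norm_power)
  also have "\<dots> \<le> 6 * norm z ^ 5 / norm z ^ 3"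
    using norm_sin_minus_z_cos_le[OF assms(2)] by (intro divide_right_mono) auto
  also have "\<dots> = 6 * norm z ^ 2"
    using assms by (simp add: field_simps eval_nat_numeral)
  finally show ?thesis .
qed

lemma norm_sph_j_minus_one_le:
  assumes "z \<noteq> 0" "norm z \<le> 1"
  shows "norm (sph_j z - 1) \<le> 3 * norm z ^ 2"
proof -
  have "sph_j z - 1 = (sin z - z) / z"
    using assms by (simp add: sph_j_def field_simps)
  then have "norm (sph_j z - 1) = norm (sin z - z) / norm z"
    by (simp add: norm_divide)
  also have "\<dots> \<le> 3 * norm z ^ 3 / norm z"
    using norm_sin_minus_id_le[OF assms(2)] by (intro divide_right_mono) auto
  also have "\<dots> = 3 * norm z ^ 2"
    using assms by (simp add: field_simps eval_nat_numeral)
  finally show ?thesis .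
qed

lemma norm_cos_plus_z_sin_minus_one_le:
  assumes "norm (z::complex) \<le> 1"
  shows "norm (cos_plus_z_sin z - 1) \<le> 6 * norm z ^ 2"
proof -
  have "norm (cos_plus_z_sin z - 1) \<le> norm (cos z - 1) + norm z * norm (sin z)"
    using norm_triangle_ineq[of "cos z - 1" "z * sin z"]
    by (simp add: cos_plus_z_sin_def norm_mult algebra_simps)
  also have "\<dots> \<le> 3 * norm z ^ 2 + norm z * (3 * norm z)"
    using norm_cos_minus_one_le[OF assms] norm_sin_le[OF assms] by (intro add_mono mult_left_mono)
        auto
  finally show ?thesis by (simp add: power2_eq_square)
qed

section \<open>The reduced determinants\<close>

text \<open>With \<open>a\<^sub>i = r\<^sub>i / v\<^sub>r\<close>, \<open>b\<^sub>i = r\<^sub>i / v\<close> and \<open>\<tau> = v / v\<^sub>r\<close>, \<open>det A\<^sub>1(\<epsilon> w, \<epsilon>\<^sup>2)\<close> and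
  \<open>det A\<^sub>2(\<epsilon> w, \<epsilon>\<^sup>2)\<close> are nonvanishing multiples of \<open>reduced_det_ball\<close> and \<open>reduced_det_shell\<close>;
  \<open>inner_minor_W\<close> and \<open>inner_minor_V\<close> are rescaled \<open>2 \<times> 2\<close> minors of the inner interface.\<close>

definition reduced_det_ball :: "real \<Rightarrow> real \<Rightarrow> complex \<Rightarrow> real \<Rightarrow> complex" where
  "reduced_det_ball a b w \<epsilon> =
     (of_real a * w)^2 * j1_over_z (of_real \<epsilon> * of_real a * w)
     - (1 - \<i> * of_real \<epsilon> * of_real b * w) * sph_j (of_real \<epsilon> * of_real a * w)"

definition inner_minor_W :: "real \<Rightarrow> real \<Rightarrow> real \<Rightarrow> complex \<Rightarrow> real \<Rightarrow> complex" where
  "inner_minor_W a2 b2 \<tau> w \<epsilon> =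
     sph_j (of_real \<epsilon> * of_real b2 * w) * cos_plus_z_sin (of_real \<epsilon> * of_real a2 * w)
     - of_real \<epsilon>^4 * (of_real a2 * w)^2 * cos (of_real \<epsilon> * of_real a2 * w)
         * j1_over_z (of_real \<epsilon> * of_real b2 * w) / of_real \<tau>^2"

definition inner_minor_V :: "real \<Rightarrow> real \<Rightarrow> real \<Rightarrow> complex \<Rightarrow> real \<Rightarrow> complex" where
  "inner_minor_V a2 b2 \<tau> w \<epsilon> =
     (of_real a2 * w)^3 * sph_j (of_real \<epsilon> * of_real b2 * w)
         * j1_over_z (of_real \<epsilon> * of_real a2 * w)
     - of_real \<epsilon>^2 * (of_real a2 * w)^2 * (of_real b2 * w) * sph_j (of_real \<epsilon> * of_real a2 * w)
         * j1_over_z (of_real \<epsilon> * of_real b2 * w) / of_real \<tau>"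

definition reduced_det_shell ::
  "real \<Rightarrow> real \<Rightarrow> real \<Rightarrow> real \<Rightarrow> real \<Rightarrow> complex \<Rightarrow> real \<Rightarrow> complex" where
  "reduced_det_shell a1 a2 b1 b2 \<tau> w \<epsilon> =
     (of_real a1 * w)^2 * j1_over_z (of_real \<epsilon> * of_real a1 * w) * inner_minor_W a2 b2 \<tau> w \<epsilon>
     - cos_plus_z_sin (of_real \<epsilon> * of_real a1 * w) * inner_minor_V a2 b2 \<tau> w \<epsilon> / (of_real a1 * w)
     - (1 - \<i> * of_real \<epsilon> * (of_real b1 * w))
         * (sph_j (of_real \<epsilon> * of_real a1 * w) * inner_minor_W a2 b2 \<tau> w \<epsilon>
            - of_real \<epsilon>^2 * cos (of_real \<epsilon> * of_real a1 * w) * inner_minor_V a2 b2 \<tau> w \<epsilon>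
                / (of_real a1 * w))"

lemma deriv_sph_j: "t \<noteq> 0 \<Longrightarrow> deriv sph_j t = (t * cos t - sin t) / t\<^sup>2"
  unfolding sph_j_def[abs_def]
  by (rule DERIV_imp_deriv) (auto intro!: derivative_eq_intros simp: field_simps power2_eq_square)

lemma deriv_sph_h: "t \<noteq> 0 \<Longrightarrow> deriv sph_h t = exp (\<i> * t) * (t + \<i>) / t\<^sup>2"
  unfolding sph_h_def[abs_def]
  by (rule DERIV_imp_deriv) (auto intro!: derivative_eq_intros simp: field_simps power2_eq_square)

lemma det_mat_Suc: "det (mat (Suc n) (Suc n) f) =
  (\<Sum>i<Suc n. f (i,0) * ((-1)^i * det (mat n n (\<lambda>(a,b). f (if a < i then a else Suc a, Suc b)))))"
proof -
  have "det (mat (Suc n) (Suc n) f)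
      = (\<Sum>i<Suc n. mat (Suc n) (Suc n) f $$ (i,0) * cofactor (mat (Suc n) (Suc n) f) i 0)"
    by (rule laplace_expansion_column) auto
  also have "\<dots>
      = (\<Sum>i<Suc n. f (i,0)
      * ((-1)^i * det (mat n n (\<lambda>(a,b). f (if a < i then a else Suc a, Suc b)))))"
  proof (rule sum.cong[OF refl])
    fix i assume i: "i \<in> {..<Suc n}"
    have "mat_delete (mat (Suc n) (Suc n) f) i 0
        = mat n n (\<lambda>(a,b). f (if a < i then a else Suc a, Suc b))"
      by (rule eq_matI) (auto simp: mat_delete_def)
    then show "mat (Suc n) (Suc n) f $$ (i,0) * cofactor (mat (Suc n) (Suc n) f) i 0 = f (i,0)
        * ((-1)^i * det (mat n n (\<lambda>(a,b). f (if a < i then a else Suc a, Suc b))))"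
      using i unfolding cofactor_def by simp
  qed
  finally show ?thesis .
qed

lemma det_mat_1: "det (mat (Suc 0) (Suc 0) f) = f (0, 0)"
  using det_mat_Suc[of 0 f] by (simp add: det_dim_zero[of "mat 0 0 _"])

lemma det_mat_2: "det (mat 2 2 f) = f (0,0) * f (1,1) - f (1,0) * f (0,1)"
  using det_mat_Suc[of 1 f] by (simp add: det_mat_1 numeral_2_eq_2)

lemma blockM_simps:
  shows "blockM ko co ki ci r 0 0 = - sph_h (ko * of_real r)"
    and "blockM ko co ki ci r 0 1 = sph_j (ki * of_real r)"
    and "blockM ko co ki ci r 1 0 = - co * deriv sph_h (ko * of_real r)"
    and "blockM ko co ki ci r 1 1 = ci * deriv sph_j (ki * of_real r)"
  by (simp_all add: blockM_def)

lemma det_ball_identity: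
  fixes x y e t d E :: complex
  assumes "x \<noteq> 0" "y \<noteq> 0" "e \<noteq> 0" "x = t * y" "d = e^2"
  shows "- (- \<i> * E / y) * (t * ((x * cos x - sin x) / x^2)) - (- d * (E * (y + \<i>) / y^2))
      * (sin x / x)
     = - \<i> * e^2 * E / y^2 * ((x / e)^2 * ((sin x - x * cos x) / x^3) - (1 - \<i> * y) * (sin x / x))"
  using assms by (simp add: field_simps power2_eq_square power3_eq_cube)

lemma det_transmission_matrix_1:
  fixes v vr \<epsilon> :: real and w :: complex and r :: "nat \<Rightarrow> real"
  assumes "0 < v" "0 < vr" "0 < r 1" "0 < \<epsilon>" "w \<noteq> 0"
  shows "det (transmission_matrix 1 r v vr (of_real \<epsilon> * w) (\<epsilon>^2)) =
    - \<i> * of_real \<epsilon>^2 * exp (\<i> * (of_real \<epsilon> * of_real (r 1 / v) * w))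
        / (of_real \<epsilon> * of_real (r 1 / v) * w)^2 * reduced_det_ball (r 1 / vr) (r 1 / v) w \<epsilon>"
proof -
  define x where "x = of_real \<epsilon> * of_real (r 1 / vr) * w"
  define y where "y = of_real \<epsilon> * of_real (r 1 / v) * w"
  have x0: "x \<noteq> 0" and y0: "y \<noteq> 0" using assms by (auto simp: x_def y_def)
  have ex: "of_real \<epsilon> * w / of_real vr * of_real (r 1) = x"
    using assms by (simp add: x_def field_simps)
  have ey: "of_real \<epsilon> * w / of_real v * of_real (r 1) = y"
    using assms by (simp add: y_def field_simps)
  have xt: "x = of_real (v / vr) * y" using assms by (simp add: x_def y_def field_simps)
  have M: "transmission_matrix 1 r v vr (of_real \<epsilon> * w) (\<epsilon>^2)
      = mat 2 2
      (\<lambda>(p,q). blockM (of_real \<epsilon> * w / of_real v) (of_real (\<epsilon>^2)) (of_real \<epsilon> * w / of_real vr)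
      (of_real (v/vr)) (r 1) p q)"
    unfolding transmission_matrix_def Let_def by (rule eq_matI) auto
  have "det (transmission_matrix 1 r v vr (of_real \<epsilon> * w) (\<epsilon>^2)) =
     - (- \<i> * exp (\<i> * y) / y) * (of_real (v / vr) * ((x * cos x - sin x) / x^2))
         - (- of_real (\<epsilon>^2) * (exp (\<i> * y) * (y + \<i>) / y^2)) * (sin x / x)"
    unfolding M det_mat_2 prod.case blockM_simps ex ey sph_h_def sph_j_def deriv_sph_j[OF x0]
        deriv_sph_h[OF y0]
    by simp
  also have "\<dots> = - \<i> * of_real \<epsilon>^2 * exp (\<i> * y) / y^2
      * ((x / of_real \<epsilon>)^2 * ((sin x - x * cos x) / x^3) - (1 - \<i> * y) * (sin x / x))"
    by (rule det_ball_identity) (use x0 y0 xt assms in auto)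
  also have "\<dots> = - \<i> * of_real \<epsilon>^2 * exp (\<i> * y) / y^2 * reduced_det_ball (r 1 / vr) (r 1 / v) w \<epsilon>"
    using assms unfolding reduced_det_ball_def j1_over_z_def sph_j_def x_def y_def
    by (simp add: field_simps)
  finally show ?thesis unfolding y_def .
qed

lemma det_mat_4_sparse:
  assumes "g (2,0) = 0" "g (3,0) = 0" "g (0,3) = 0" "g (1,3) = 0"
  shows "det (mat 4 4 g) = g (0,0)
      * (g (1,1) * (g (2,2) * g (3,3) - g (2,3) * g (3,2)) - g (1,2)
      * (g (2,1) * g (3,3) - g (2,3) * g (3,1)))
       - g (1,0) *
           (g (0,1) * (g (2,2) * g (3,3) - g (2,3) * g (3,2)) - g (0,2)
           * (g (2,1) * g (3,3) - g (2,3) * g (3,1)))"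
  using assms by (simp add: det_mat_Suc det_mat_1 eval_nat_numeral algebra_simps)

lemma det_shell_identity:
  fixes x1 x2 y1 y2 t e d E s1 c1 s2 c2 sy cy A B C D :: complex
  assumes nz: "t \<noteq> 0" "e \<noteq> 0" "C \<noteq> 0" "D \<noteq> 0"
    and rel: "x1 = t * y1" "x2 = t * y2" "y1 = e * C" "y2 = e * D" "A = t * C" "B = t * D" "d = e^2"
  defines "g00 \<equiv> - (- \<i> * E / y1)" and "g01 \<equiv> s1 / x1" and "g02 \<equiv> - \<i> * (c1 + \<i> * s1) / x1"
    and "g10 \<equiv> - d * (E * (y1 + \<i>) / y1^2)" and "g11 \<equiv> t * ((x1 * c1 - s1) / x1^2)"
    and "g12 \<equiv> t * ((c1 + \<i> * s1) * (x1 + \<i>) / x1^2)"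
    and "g21 \<equiv> - (s2 / x2)" and "g22 \<equiv> - (- \<i> * (c2 + \<i> * s2) / x2)" and "g23 \<equiv> sy / y2"
    and "g31 \<equiv> - t * ((x2 * c2 - s2) / x2^2)" and "g32 \<equiv> - t * ((c2 + \<i> * s2) * (x2 + \<i>) / x2^2)"
    and "g33 \<equiv> d * ((y2 * cy - sy) / y2^2)"
  shows "g00 * (g11 * (g22 * g33 - g23 * g32) - g12 * (g21 * g33 - g23 * g31))
       - g10 * (g01 * (g22 * g33 - g23 * g32) - g02 * (g21 * g33 - g23 * g31))
     = E * t * e^2 / (x2^2 * y1^2) *
       (A^2 * ((s1 - x1 * c1) / x1^3)
           * (sy / y2 * (c2 + x2 * s2) - e^4 * B^2 * c2 * ((sy - y2 * cy) / y2^3) / t^2)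
        - (c1 + x1 * s1)
            * (B^3 * (sy / y2) * ((s2 - x2 * c2) / x2^3) - e^2 * B^2 * D * (s2 / x2)
            * ((sy - y2 * cy) / y2^3) / t) / A
        - (1 - \<i> * e * C)
            * (s1 / x1 * (sy / y2 * (c2 + x2 * s2) - e^4 * B^2 * c2 * ((sy - y2 * cy) / y2^3) / t^2)
             - e^2 * c1 *
                 (B^3 * (sy / y2) * ((s2 - x2 * c2) / x2^3) - e^2 * B^2 * D * (s2 / x2)
                 * ((sy - y2 * cy) / y2^3) / t) / A))"
proof -
  \<comment> \<open>Subtracting the \<open>j\<close>-column from the \<open>h\<close>-column leaves \<open>-\<i>\<close> times a \<open>y\<close>-type column,
     since \<open>h\<^sub>0 = j\<^sub>0 + \<i> y\<^sub>0\<close>; this removes the oscillating exponentials inside the resonator.\<close>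
  have nz2: "x1 \<noteq> 0" "x2 \<noteq> 0" "y1 \<noteq> 0" "y2 \<noteq> 0" using nz rel by auto
  define Y02 where "Y02 = c1 / x1"
  define Y12 where "Y12 = t * (- (x1 * s1 + c1) / x1^2)"
  define Y22 where "Y22 = - (c2 / x2)"
  define Y32 where "Y32 = - t * (- (x2 * s2 + c2) / x2^2)"
  have c02: "g02 = g01 - \<i> * Y02"
    using nz2 unfolding g02_def g01_def Y02_def by (simp add: field_simps)
  have c12: "g12 = g11 - \<i> * Y12"
    using nz2 unfolding g12_def g11_def Y12_def
    by (simp add: field_simps algebra_simps power2_eq_square)
  have c22: "g22 = g21 - \<i> * Y22"
    using nz2 unfolding g22_def g21_def Y22_def by (simp add: field_simps)
  have c32: "g32 = g31 - \<i> * Y32"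
    using nz2 unfolding g32_def g31_def Y32_def
    by (simp add: field_simps algebra_simps power2_eq_square)
  have step: "g00 * (g11 * (g22 * g33 - g23 * g32) - g12 * (g21 * g33 - g23 * g31))
       - g10 * (g01 * (g22 * g33 - g23 * g32) - g02 * (g21 * g33 - g23 * g31))
     = (- \<i> * g00) * (g11 * (Y22 * g33 - g23 * Y32) - Y12 * (g21 * g33 - g23 * g31))
       - (- \<i> * g10) * (g01 * (Y22 * g33 - g23 * Y32) - Y02 * (g21 * g33 - g23 * g31))"
    unfolding c02 c12 c22 c32 by (simp add: algebra_simps)
  have i00: "- \<i> * g00 = E / y1" unfolding g00_def by simp
  have i10: "- \<i> * g10 = d * E * (\<i> * y1 - 1) / y1^2"
    unfolding g10_def by (simp add: field_simps algebra_simps)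
  define p1 where "p1 = (s1 - x1 * c1) / x1^3"
  define q1 where "q1 = c1 + x1 * s1"
  define sinc1 where "sinc1 = s1 / x1"
  define WY where "WY = sy / y2 * (c2 + x2 * s2) - e^4 * B^2 * c2 * ((sy - y2 * cy) / y2^3) / t^2"
  define V where "V = B^3 * (sy / y2) * ((s2 - x2 * c2) / x2^3) - e^2 * B^2 * D * (s2 / x2)
      * ((sy - y2 * cy) / y2^3) / t"
  have WYeq: "Y22 * g33 - g23 * Y32 = - (t / x2^2) * WY"
    using nz nz2 unfolding Y22_def g33_def g23_def Y32_def WY_def rel(7) rel(2) rel(4) rel(6)
    by (simp add: field_simps eval_nat_numeral)
  have WJeq: "g21 * g33 - g23 * g31 = - (t * e^3 / x2^2) * V"
    using nz nz2 unfolding g21_def g33_def g23_def g31_def V_def rel(7) rel(2) rel(4) rel(6)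
    by (simp add: field_simps eval_nat_numeral)
  have g11eq: "g11 = - t * x1 * p1"
    using nz2 unfolding g11_def p1_def by (simp add: field_simps power2_eq_square power3_eq_cube)
  have Y12eq: "Y12 = - t * q1 / x1^2" unfolding Y12_def q1_def by (simp add: field_simps)
  have g01eq: "g01 = sinc1" unfolding g01_def sinc1_def ..
  have fin: "(E / y1)
      * ((- t * x1 * p1) * (- (t / x2^2) * WY) - (- t * q1 / x1^2) * (- (t * e^3 / x2^2) * V))
      - (d * E * (\<i> * y1 - 1) / y1^2)
          * (sinc1 * (- (t / x2^2) * WY) - (c1 / x1) * (- (t * e^3 / x2^2) * V))
     = E * t * e^2 / (x2^2 * y1^2)
         * (A^2 * p1 * WY - q1 * V / A - (1 - \<i> * e * C) * (sinc1 * WY - e^2 * c1 * V / A))"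
    using nz nz2 unfolding rel(1) rel(3) rel(5) rel(7) by (simp add: field_simps eval_nat_numeral)
  have "(- \<i> * g00) * (g11 * (Y22 * g33 - g23 * Y32) - Y12 * (g21 * g33 - g23 * g31))
       - (- \<i> * g10) * (g01 * (Y22 * g33 - g23 * Y32) - Y02 * (g21 * g33 - g23 * g31))
     = E * t * e^2 / (x2^2 * y1^2)
         * (A^2 * p1 * WY - q1 * V / A - (1 - \<i> * e * C) * (sinc1 * WY - e^2 * c1 * V / A))"
    unfolding i00 i10 WYeq WJeq g11eq Y12eq g01eq Y02_def by (rule fin)
  then show ?thesis unfolding step[symmetric] p1_def q1_def sinc1_def WY_def V_def .
qed

lemma less_4_cases: "(i::nat) < 4 \<Longrightarrow> i = 0 \<or> i = 1 \<or> i = 2 \<or> i = 3" by auto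

definition transmission_entries_2 ::
  "(nat \<Rightarrow> real) \<Rightarrow> real \<Rightarrow> real \<Rightarrow> complex \<Rightarrow> real \<Rightarrow> nat \<times> nat \<Rightarrow> complex" where
  "transmission_entries_2 r v vr \<omega> \<delta> = (\<lambda>(p, q).
     if p < 2 then
       (if q < 2
        then blockM (\<omega> / of_real v) (of_real \<delta>) (\<omega> / of_real vr) (of_real (v/vr)) (r 1) p q
        else blockR (\<omega> / of_real v) (of_real \<delta>) (\<omega> / of_real vr) (of_real (v/vr)) (r 1) p (q - 2))
     else
       (if q < 2
        then blockL (\<omega> / of_real vr) (of_real (v/vr)) (\<omega> / of_real v) (of_real \<delta>) (r 2) (p - 2) q
        else blockM (\<omega> / of_real vr) (of_real (v/vr)) (\<omega> / of_real v) (of_real \<delta>) (r 2)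
               (p - 2) (q - 2)))"

lemma transmission_matrix_2_eq:
  "transmission_matrix 2 r v vr \<omega> \<delta> = mat 4 4 (transmission_entries_2 r v vr \<omega> \<delta>)"
proof (rule eq_matI)
  fix i j assume "i < dim_row (mat 4 4 (transmission_entries_2 r v vr \<omega> \<delta>))"
    "j < dim_col (mat 4 4 (transmission_entries_2 r v vr \<omega> \<delta>))"
  then have "i < 4" "j < 4" by simp_all
  then show "transmission_matrix 2 r v vr \<omega> \<delta> $$ (i, j)
      = mat 4 4 (transmission_entries_2 r v vr \<omega> \<delta>) $$ (i, j)"
    using less_4_cases[OF \<open>i < 4\<close>] less_4_cases[OF \<open>j < 4\<close>]
    unfolding transmission_matrix_def Let_def transmission_entries_2_def
    by (elim disjE) (simp_all add: numeral_2_eq_2[symmetric])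
qed (simp_all add: transmission_matrix_def Let_def)

lemma transmission_entries_2_zero:
  shows "transmission_entries_2 r v vr \<omega> \<delta> (2,0) = 0"
    and "transmission_entries_2 r v vr \<omega> \<delta> (3,0) = 0"
    and "transmission_entries_2 r v vr \<omega> \<delta> (0,3) = 0"
    and "transmission_entries_2 r v vr \<omega> \<delta> (1,3) = 0"
  by (simp_all add: transmission_entries_2_def blockM_def blockR_def blockL_def)

lemma transmission_entries_2_simps:
  shows "transmission_entries_2 r v vr \<omega> \<delta> (0,0) = - sph_h (\<omega> / of_real v * of_real (r 1))"
    and "transmission_entries_2 r v vr \<omega> \<delta> (0,1) = sph_j (\<omega> / of_real vr * of_real (r 1))"
    and "transmission_entries_2 r v vr \<omega> \<delta> (0,2) = sph_h (\<omega> / of_real vr * of_real (r 1))"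
    and "transmission_entries_2 r v vr \<omega> \<delta> (1,0) = - of_real \<delta>
        * deriv sph_h (\<omega> / of_real v * of_real (r 1))"
    and "transmission_entries_2 r v vr \<omega> \<delta> (1,1) = of_real (v/vr)
        * deriv sph_j (\<omega> / of_real vr * of_real (r 1))"
    and "transmission_entries_2 r v vr \<omega> \<delta> (1,2) = of_real (v/vr)
        * deriv sph_h (\<omega> / of_real vr * of_real (r 1))"
    and "transmission_entries_2 r v vr \<omega> \<delta> (2,1) = - sph_j (\<omega> / of_real vr * of_real (r 2))"
    and "transmission_entries_2 r v vr \<omega> \<delta> (2,2) = - sph_h (\<omega> / of_real vr * of_real (r 2))"
    and "transmission_entries_2 r v vr \<omega> \<delta> (2,3) = sph_j (\<omega> / of_real v * of_real (r 2))"
    and "transmission_entries_2 r v vr \<omega> \<delta> (3,1) = - of_real (v/vr)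
        * deriv sph_j (\<omega> / of_real vr * of_real (r 2))"
    and "transmission_entries_2 r v vr \<omega> \<delta> (3,2) = - of_real (v/vr)
        * deriv sph_h (\<omega> / of_real vr * of_real (r 2))"
    and "transmission_entries_2 r v vr \<omega> \<delta> (3,3) = of_real \<delta>
        * deriv sph_j (\<omega> / of_real v * of_real (r 2))"
  by (simp_all add: transmission_entries_2_def blockM_def blockR_def blockL_def)

lemma det_transmission_matrix_2:
  fixes v vr \<epsilon> :: real and w :: complex and r :: "nat \<Rightarrow> real"
  assumes "0 < v" "0 < vr" "0 < r 2" "0 < r 1" "0 < \<epsilon>" "w \<noteq> 0"
  shows "det (transmission_matrix 2 r v vr (of_real \<epsilon> * w) (\<epsilon>^2)) =
    exp (\<i> * (of_real \<epsilon> * of_real (r 1 / v) * w)) * of_real (v / vr) * of_real \<epsilon>^2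
      / ((of_real \<epsilon> * of_real (r 2 / vr) * w)^2 * (of_real \<epsilon> * of_real (r 1 / v) * w)^2)
      * reduced_det_shell (r 1 / vr) (r 2 / vr) (r 1 / v) (r 2 / v) (v / vr) w \<epsilon>"
proof -
  define x1 where "x1 = of_real \<epsilon> * of_real (r 1 / vr) * w"
  define x2 where "x2 = of_real \<epsilon> * of_real (r 2 / vr) * w"
  define y1 where "y1 = of_real \<epsilon> * of_real (r 1 / v) * w"
  define y2 where "y2 = of_real \<epsilon> * of_real (r 2 / v) * w"
  have x10: "x1 \<noteq> 0" and y10: "y1 \<noteq> 0" and x20: "x2 \<noteq> 0" and y20: "y2 \<noteq> 0"
    using assms by (auto simp: x1_def y1_def x2_def y2_def)
  have ex1: "of_real \<epsilon> * w / of_real vr * of_real (r 1) = x1"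
    using assms by (simp add: x1_def field_simps)
  have ex2: "of_real \<epsilon> * w / of_real vr * of_real (r 2) = x2"
    using assms by (simp add: x2_def field_simps)
  have ey1: "of_real \<epsilon> * w / of_real v * of_real (r 1) = y1"
    using assms by (simp add: y1_def field_simps)
  have ey2: "of_real \<epsilon> * w / of_real v * of_real (r 2) = y2"
    using assms by (simp add: y2_def field_simps)
  have "det (transmission_matrix 2 r v vr (of_real \<epsilon> * w) (\<epsilon>^2)) =
      - (- \<i> * exp (\<i> * y1) / y1)
          * (of_real (v/vr) * ((x1 * cos x1 - sin x1) / x1^2)
          * (- (- \<i> * (cos x2 + \<i> * sin x2) / x2)
          * (of_real (\<epsilon>^2) * ((y2 * cos y2 - sin y2) / y2^2)) - sin y2 / y2
          * (- of_real (v/vr) * ((cos x2 + \<i> * sin x2) * (x2 + \<i>) / x2^2)))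
          - of_real (v/vr) * ((cos x1 + \<i> * sin x1) * (x1 + \<i>) / x1^2)
              * (- (sin x2 / x2) * (of_real (\<epsilon>^2) * ((y2 * cos y2 - sin y2) / y2^2)) - sin y2 / y2
              * (- of_real (v/vr) * ((x2 * cos x2 - sin x2) / x2^2))))
      - (- of_real (\<epsilon>^2) * (exp (\<i> * y1) * (y1 + \<i>) / y1^2))
          * (sin x1 / x1
          * (- (- \<i> * (cos x2 + \<i> * sin x2) / x2)
          * (of_real (\<epsilon>^2) * ((y2 * cos y2 - sin y2) / y2^2)) - sin y2 / y2
          * (- of_real (v/vr) * ((cos x2 + \<i> * sin x2) * (x2 + \<i>) / x2^2)))
          - (- \<i> * (cos x1 + \<i> * sin x1) / x1)
              * (- (sin x2 / x2) * (of_real (\<epsilon>^2) * ((y2 * cos y2 - sin y2) / y2^2)) - sin y2 / y2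
              * (- of_real (v/vr) * ((x2 * cos x2 - sin x2) / x2^2))))"
    unfolding transmission_matrix_2_eq
    unfolding det_mat_4_sparse[of "transmission_entries_2 r v vr (of_real \<epsilon> * w) (\<epsilon>^2)",
        OF transmission_entries_2_zero]
    unfolding transmission_entries_2_simps
    unfolding ex1 ex2 ey1 ey2
    unfolding deriv_sph_j[OF x10] deriv_sph_j[OF x20] deriv_sph_j[OF y20] deriv_sph_h[OF y10]
        deriv_sph_h[OF x10] deriv_sph_h[OF x20]
    unfolding sph_h_def sph_j_def
    unfolding exp_Euler[of x1] exp_Euler[of x2] ..
  also have "\<dots> = exp (\<i> * y1) * of_real (v / vr) * of_real \<epsilon>^2 / (x2^2 * y1^2) *
       ((of_real (r 1 / vr) * w)^2 * ((sin x1 - x1 * cos x1) / x1^3)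
           * (sin y2 / y2 * (cos x2 + x2 * sin x2) - of_real \<epsilon>^4 * (of_real (r 2 / vr) * w)^2
           * cos x2 * ((sin y2 - y2 * cos y2) / y2^3) / of_real (v / vr)^2)
        - (cos x1 + x1 * sin x1)
            * ((of_real (r 2 / vr) * w)^3 * (sin y2 / y2) * ((sin x2 - x2 * cos x2) / x2^3)
            - of_real \<epsilon>^2 * (of_real (r 2 / vr) * w)^2 * (of_real (r 2 / v) * w) * (sin x2 / x2)
            * ((sin y2 - y2 * cos y2) / y2^3) / of_real (v / vr)) / (of_real (r 1 / vr) * w)
        - (1 - \<i> * of_real \<epsilon> * (of_real (r 1 / v) * w))
            * (sin x1 / x1
            * (sin y2 / y2 * (cos x2 + x2 * sin x2) - of_real \<epsilon>^4 * (of_real (r 2 / vr) * w)^2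
            * cos x2 * ((sin y2 - y2 * cos y2) / y2^3) / of_real (v / vr)^2)
             - of_real \<epsilon>^2 * cos x1
                 * ((of_real (r 2 / vr) * w)^3 * (sin y2 / y2) * ((sin x2 - x2 * cos x2) / x2^3)
                 - of_real \<epsilon>^2 * (of_real (r 2 / vr) * w)^2 * (of_real (r 2 / v) * w)
                 * (sin x2 / x2) * ((sin y2 - y2 * cos y2) / y2^3) / of_real (v / vr))
                 / (of_real (r 1 / vr) * w)))"
  proof (rule det_shell_identity)
    show "complex_of_real (v / vr) \<noteq> 0" "complex_of_real \<epsilon> \<noteq> 0" "complex_of_real (r 1 / v)
        * w \<noteq> 0" "complex_of_real (r 2 / v) * w \<noteq> 0"
      using assms by auto
    show "x1 = complex_of_real (v / vr) * y1" "x2 = complex_of_real (v / vr) * y2"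
      using assms by (simp_all add: x1_def y1_def x2_def y2_def field_simps)
    show "y1 = complex_of_real \<epsilon> * (complex_of_real (r 1 / v) * w)" "y2 = complex_of_real \<epsilon>
        * (complex_of_real (r 2 / v) * w)"
      by (simp_all add: y1_def y2_def mult.assoc)
    show "complex_of_real (r 1 / vr) * w = complex_of_real (v / vr)
        * (complex_of_real (r 1 / v) * w)"
      "complex_of_real (r 2 / vr) * w = complex_of_real (v / vr) * (complex_of_real (r 2 / v) * w)"
      using assms by (simp_all add: field_simps)
    show "complex_of_real (\<epsilon>^2) = complex_of_real \<epsilon> ^ 2" by simp
  qed
  also have "\<dots> = exp (\<i> * y1) * of_real (v / vr) * of_real \<epsilon>^2 / (x2^2 * y1^2)
      * reduced_det_shell (r 1 / vr) (r 2 / vr) (r 1 / v) (r 2 / v) (v / vr) w \<epsilon>"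
    unfolding reduced_det_shell_def inner_minor_W_def inner_minor_V_def j1_over_z_def
        cos_plus_z_sin_def sph_j_def x1_def x2_def y1_def y2_def ..
  finally show ?thesis unfolding x2_def y1_def .
qed

lemma reduced_det_ball_holomorphic: "a1 \<noteq> 0 \<Longrightarrow> \<epsilon> \<noteq> 0
    \<Longrightarrow> (\<lambda>w. reduced_det_ball a1 b1 w \<epsilon>) holomorphic_on (- {0})"
  unfolding reduced_det_ball_def j1_over_z_def sph_j_def by (auto intro!: holomorphic_intros)

lemma reduced_det_ball_continuous: "a1 \<noteq> 0 \<Longrightarrow> w \<noteq> 0
    \<Longrightarrow> continuous_on {0<..} (\<lambda>\<epsilon>. reduced_det_ball a1 b1 w \<epsilon>)"
  unfolding reduced_det_ball_def j1_over_z_def sph_j_def by (auto intro!: continuous_intros)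

lemma reduced_det_shell_holomorphic: "a1 \<noteq> 0 \<Longrightarrow> a2 \<noteq> 0 \<Longrightarrow> b2 \<noteq> 0 \<Longrightarrow> \<tau> \<noteq> 0 \<Longrightarrow> \<epsilon> \<noteq> 0
    \<Longrightarrow> (\<lambda>w. reduced_det_shell a1 a2 b1 b2 \<tau> w \<epsilon>) holomorphic_on (- {0})"
  unfolding reduced_det_shell_def inner_minor_W_def inner_minor_V_def j1_over_z_def sph_j_def
      cos_plus_z_sin_def by (intro holomorphic_intros) auto

lemma reduced_det_shell_continuous: "a1 \<noteq> 0 \<Longrightarrow> a2 \<noteq> 0 \<Longrightarrow> b2 \<noteq> 0 \<Longrightarrow> \<tau> \<noteq> 0 \<Longrightarrow> w \<noteq> 0
    \<Longrightarrow> continuous_on {0<..} (\<lambda>\<epsilon>. reduced_det_shell a1 a2 b1 b2 \<tau> w \<epsilon>)"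
  unfolding reduced_det_shell_def inner_minor_W_def inner_minor_V_def j1_over_z_def sph_j_def
      cos_plus_z_sin_def by (auto intro!: continuous_intros)

section \<open>Uniform small-parameter bounds\<close>

definition uniform_bigo :: "complex set \<Rightarrow> nat \<Rightarrow> (real \<Rightarrow> complex \<Rightarrow> complex) \<Rightarrow> bool" where
  "uniform_bigo S k f \<longleftrightarrow>
     (\<exists>C e. 0 < e \<and> (\<forall>\<epsilon> w. 0 < \<epsilon> \<longrightarrow> \<epsilon> < e \<longrightarrow> w \<in> S \<longrightarrow> norm (f \<epsilon> w) \<le> C * \<epsilon> ^ k))"

lemma uniform_bigoI:
  "0 < e \<Longrightarrow> (\<And>\<epsilon> w. 0 < \<epsilon> \<Longrightarrow> \<epsilon> < e \<Longrightarrow> w \<in> S \<Longrightarrow> norm (f \<epsilon> w) \<le> C * \<epsilon> ^ k) \<Longrightarrow>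
   uniform_bigo S k f"
  unfolding uniform_bigo_def by blast

lemma uniform_bigoE:
  assumes "uniform_bigo S k f"
  obtains C e where "0 < e" "0 \<le> C"
    "\<And>\<epsilon> w. 0 < \<epsilon> \<Longrightarrow> \<epsilon> < e \<Longrightarrow> w \<in> S \<Longrightarrow> norm (f \<epsilon> w) \<le> C * \<epsilon> ^ k"
proof -
  obtain C e where e: "0 < e"
    and bound: "\<And>\<epsilon> w. 0 < \<epsilon> \<Longrightarrow> \<epsilon> < e \<Longrightarrow> w \<in> S \<Longrightarrow> norm (f \<epsilon> w) \<le> C * \<epsilon> ^ k"
    using assms unfolding uniform_bigo_def by blast
  have "norm (f \<epsilon> w) \<le> \<bar>C\<bar> * \<epsilon> ^ k" if "0 < \<epsilon>" "\<epsilon> < e" "w \<in> S" for \<epsilon> w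
    using bound[OF that] mult_right_mono[of C "\<bar>C\<bar>" "\<epsilon> ^ k"] that
    by (smt (verit) zero_le_power)
  then show ?thesis
    using that[of e "\<bar>C\<bar>"] e by auto
qed

lemma uniform_bigo_cong:
  "uniform_bigo S k f \<Longrightarrow> (\<And>\<epsilon> w. 0 < \<epsilon> \<Longrightarrow> w \<in> S \<Longrightarrow> g \<epsilon> w = f \<epsilon> w) \<Longrightarrow> uniform_bigo S k g"
  unfolding uniform_bigo_def by (metis (no_types, lifting))

lemma uniform_bigo_boundedI:
  "(\<And>w. w \<in> S \<Longrightarrow> norm (g w) \<le> M) \<Longrightarrow> uniform_bigo S 0 (\<lambda>\<epsilon> w. g w)"
  by (rule uniform_bigoI[of 1 _ _ M]) auto

lemma uniform_bigo_const: "uniform_bigo S 0 (\<lambda>\<epsilon> w. c)"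
  by (rule uniform_bigo_boundedI[of _ _ "norm c"]) auto

lemma uniform_bigo_linear: "bounded S \<Longrightarrow> uniform_bigo S 0 (\<lambda>\<epsilon> w. g * w)"
  by (metis bounded_iff norm_mult mult_left_mono norm_ge_zero uniform_bigo_boundedI)

lemma uniform_bigo_inverse_linear:
  assumes "\<And>w. w \<in> S \<Longrightarrow> m \<le> norm w" "0 < m" "g \<noteq> 0"
  shows "uniform_bigo S 0 (\<lambda>\<epsilon> w. 1 / (g * w))"
proof (rule uniform_bigo_boundedI)
  fix w assume "w \<in> S"
  then have "norm g * m \<le> norm g * norm w"
    using assms(1) by (intro mult_left_mono) auto
  then show "norm (1 / (g * w)) \<le> 1 / (norm g * m)"
    using assms(2,3) by (simp add: norm_divide norm_mult frac_le)
qed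

lemma uniform_bigo_eps_power: "uniform_bigo S n (\<lambda>\<epsilon> w. of_real \<epsilon> ^ n)"
  by (rule uniform_bigoI[of 1 _ _ 1]) (auto simp: norm_power)

lemma uniform_bigo_eps: "uniform_bigo S 1 (\<lambda>\<epsilon> w. of_real \<epsilon>)"
  using uniform_bigo_eps_power[of S 1] by simp

lemma uniform_bigo_mono: "uniform_bigo S k f \<Longrightarrow> l \<le> k \<Longrightarrow> uniform_bigo S l f"
proof -
  assume "uniform_bigo S k f" "l \<le> k"
  then obtain C e where e: "0 < e" "0 \<le> C"
    and bound: "\<And>\<epsilon> w. 0 < \<epsilon> \<Longrightarrow> \<epsilon> < e \<Longrightarrow> w \<in> S \<Longrightarrow> norm (f \<epsilon> w) \<le> C * \<epsilon> ^ k"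
    by (metis uniform_bigoE)
  show ?thesis
  proof (rule uniform_bigoI[of "min e 1" _ _ C])
    fix \<epsilon> w assume a: "0 < \<epsilon>" "\<epsilon> < min e 1" "w \<in> S"
    have "C * \<epsilon> ^ k \<le> C * \<epsilon> ^ l"
      using a e \<open>l \<le> k\<close> by (intro mult_left_mono power_decreasing) auto
    then show "norm (f \<epsilon> w) \<le> C * \<epsilon> ^ l"
      using bound[of \<epsilon> w] a by auto
  qed (use e in auto)
qed

lemma uniform_bigo_add:
  assumes "uniform_bigo S k f" "uniform_bigo S k g"
  shows "uniform_bigo S k (\<lambda>\<epsilon> w. f \<epsilon> w + g \<epsilon> w)"
proof -
  obtain C1 e1 C2 e2 where e: "0 < e1" "0 < e2"
    and bound1: "\<And>\<epsilon> w. 0 < \<epsilon> \<Longrightarrow> \<epsilon> < e1 \<Longrightarrow> w \<in> S \<Longrightarrow> norm (f \<epsilon> w) \<le> C1 * \<epsilon> ^ k"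
    and bound2: "\<And>\<epsilon> w. 0 < \<epsilon> \<Longrightarrow> \<epsilon> < e2 \<Longrightarrow> w \<in> S \<Longrightarrow> norm (g \<epsilon> w) \<le> C2 * \<epsilon> ^ k"
    using assms by (metis uniform_bigoE)
  show ?thesis
  proof (rule uniform_bigoI[of "min e1 e2" _ _ "C1 + C2"])
    fix \<epsilon> w assume a: "0 < \<epsilon>" "\<epsilon> < min e1 e2" "w \<in> S"
    have "norm (f \<epsilon> w + g \<epsilon> w) \<le> C1 * \<epsilon> ^ k + C2 * \<epsilon> ^ k"
      using norm_triangle_ineq[of "f \<epsilon> w" "g \<epsilon> w"] bound1[of \<epsilon> w] bound2[of \<epsilon> w] a by auto
    then show "norm (f \<epsilon> w + g \<epsilon> w) \<le> (C1 + C2) * \<epsilon> ^ k"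
      by (simp add: algebra_simps)
  qed (use e in auto)
qed

lemma uniform_bigo_uminus: "uniform_bigo S k f \<Longrightarrow> uniform_bigo S k (\<lambda>\<epsilon> w. - f \<epsilon> w)"
  unfolding uniform_bigo_def by simp

lemma uniform_bigo_diff:
  "uniform_bigo S k f \<Longrightarrow> uniform_bigo S k g \<Longrightarrow> uniform_bigo S k (\<lambda>\<epsilon> w. f \<epsilon> w - g \<epsilon> w)"
  using uniform_bigo_add[of S k f "\<lambda>\<epsilon> w. - g \<epsilon> w"] uniform_bigo_uminus[of S k g] by simp

lemma uniform_bigo_mult:
  assumes "uniform_bigo S k f" "uniform_bigo S l g" "m = k + l"
  shows "uniform_bigo S m (\<lambda>\<epsilon> w. f \<epsilon> w * g \<epsilon> w)"
proof -
  obtain C1 e1 C2 e2 where e: "0 < e1" "0 < e2" "0 \<le> C1"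
    and bound1: "\<And>\<epsilon> w. 0 < \<epsilon> \<Longrightarrow> \<epsilon> < e1 \<Longrightarrow> w \<in> S \<Longrightarrow> norm (f \<epsilon> w) \<le> C1 * \<epsilon> ^ k"
    and bound2: "\<And>\<epsilon> w. 0 < \<epsilon> \<Longrightarrow> \<epsilon> < e2 \<Longrightarrow> w \<in> S \<Longrightarrow> norm (g \<epsilon> w) \<le> C2 * \<epsilon> ^ l"
    using assms(1,2) by (metis uniform_bigoE)
  show ?thesis
  proof (rule uniform_bigoI[of "min e1 e2" _ _ "C1 * C2"])
    fix \<epsilon> w assume a: "0 < \<epsilon>" "\<epsilon> < min e1 e2" "w \<in> S"
    have "norm (f \<epsilon> w * g \<epsilon> w) \<le> (C1 * \<epsilon> ^ k) * (C2 * \<epsilon> ^ l)"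
      unfolding norm_mult using bound1[of \<epsilon> w] bound2[of \<epsilon> w] a e by (intro mult_mono) auto
    then show "norm (f \<epsilon> w * g \<epsilon> w) \<le> (C1 * C2) * \<epsilon> ^ m"
      by (simp add: assms(3) algebra_simps power_add)
  qed (use e in auto)
qed

lemma uniform_bigo_cmult: "uniform_bigo S k f \<Longrightarrow> uniform_bigo S k (\<lambda>\<epsilon> w. c * f \<epsilon> w)"
  by (rule uniform_bigo_mult[OF uniform_bigo_const]) simp_all

lemma uniform_bigo_0_of_diff:
  "uniform_bigo S k (\<lambda>\<epsilon> w. f \<epsilon> w - g \<epsilon> w) \<Longrightarrow> uniform_bigo S 0 g \<Longrightarrow> uniform_bigo S 0 f"
  using uniform_bigo_add[OF uniform_bigo_mono, of S k "\<lambda>\<epsilon> w. f \<epsilon> w - g \<epsilon> w" 0 g] by simp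

lemma uniform_bigo_rescaled:
  assumes phi: "\<And>z. z \<noteq> 0 \<Longrightarrow> norm z \<le> 1 \<Longrightarrow> norm (\<phi> z) \<le> C * norm z ^ k"
    and S: "bounded S" "0 \<notin> S" and "a \<noteq> 0"
  shows "uniform_bigo S k (\<lambda>\<epsilon> w. \<phi> (of_real \<epsilon> * a * w))"
proof -
  obtain M where M: "0 < M" "\<And>w. w \<in> S \<Longrightarrow> norm w \<le> M"
    using S(1) bounded_pos by blast
  define e where "e = 1 / (norm a * M)"
  have e: "0 < e" using \<open>a \<noteq> 0\<close> M by (simp add: e_def)
  show ?thesis
  proof (rule uniform_bigoI[OF e, of _ _ "\<bar>C\<bar> * (norm a * M) ^ k"])
    fix \<epsilon> w assume h: "0 < \<epsilon>" "\<epsilon> < e" "w \<in> S"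
    have norm_z: "norm (of_real \<epsilon> * a * w) = \<epsilon> * (norm a * norm w)"
      using h by (simp add: norm_mult)
    have le: "\<epsilon> * (norm a * norm w) \<le> \<epsilon> * (norm a * M)"
      using h M by (intro mult_left_mono) auto
    have "\<epsilon> * (norm a * M) < e * (norm a * M)"
      using h \<open>a \<noteq> 0\<close> M by (intro mult_strict_right_mono) auto
    then have "\<epsilon> * (norm a * M) < 1"
      using \<open>a \<noteq> 0\<close> M by (simp add: e_def)
    moreover have "of_real \<epsilon> * a * w \<noteq> 0"
      using h \<open>a \<noteq> 0\<close> S(2) by auto
    ultimately have "norm (\<phi> (of_real \<epsilon> * a * w)) \<le> C * norm (of_real \<epsilon> * a * w) ^ k"
      using phi norm_z le by (metis order.trans less_imp_le)
    also have "\<dots> \<le> \<bar>C\<bar> * (\<epsilon> * (norm a * M)) ^ k"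
      unfolding norm_z using le h M(2)[OF h(3)] by (intro mult_mono power_mono)
          (auto simp: abs_ge_self)
    finally show "norm (\<phi> (of_real \<epsilon> * a * w)) \<le> \<bar>C\<bar> * (norm a * M) ^ k * \<epsilon> ^ k"
      by (simp add: power_mult_distrib mult_ac)
  qed
qed

lemma uniform_bigo_j1_over_z:
  "bounded S \<Longrightarrow> 0 \<notin> S \<Longrightarrow> a \<noteq> 0 \<Longrightarrow>
   uniform_bigo S 2 (\<lambda>\<epsilon> w. j1_over_z (of_real \<epsilon> * of_real a * w) - 1/3)"
  using uniform_bigo_rescaled[of "\<lambda>z. j1_over_z z - 1/3" 6 2 S "of_real a"]
    norm_j1_over_z_minus_third_le by simp

lemma uniform_bigo_sph_j:
  "bounded S \<Longrightarrow> 0 \<notin> S \<Longrightarrow> a \<noteq> 0 \<Longrightarrow>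
   uniform_bigo S 2 (\<lambda>\<epsilon> w. sph_j (of_real \<epsilon> * of_real a * w) - 1)"
  using uniform_bigo_rescaled[of "\<lambda>z. sph_j z - 1" 3 2 S "of_real a"] norm_sph_j_minus_one_le
  by simp

lemma uniform_bigo_cos_plus_z_sin:
  "bounded S \<Longrightarrow> 0 \<notin> S \<Longrightarrow> a \<noteq> 0 \<Longrightarrow>
   uniform_bigo S 2 (\<lambda>\<epsilon> w. cos_plus_z_sin (of_real \<epsilon> * of_real a * w) - 1)"
  using uniform_bigo_rescaled[of "\<lambda>z. cos_plus_z_sin z - 1" 6 2 S "of_real a"]
    norm_cos_plus_z_sin_minus_one_le by simp

lemma uniform_bigo_cos:
  "bounded S \<Longrightarrow> 0 \<notin> S \<Longrightarrow> a \<noteq> 0 \<Longrightarrow> uniform_bigo S 0 (\<lambda>\<epsilon> w. cos (of_real \<epsilon> * of_real a * w))"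
  using uniform_bigo_rescaled[of "\<lambda>z. cos z" 4 0 S "of_real a"] norm_cos_le_4 by simp

lemma uniform_bigo_reduced_det_ball:
  assumes S: "bounded S" "0 \<notin> S" and a: "a1 \<noteq> 0"
  shows "uniform_bigo S 2
      (\<lambda>\<epsilon> w. reduced_det_ball a1 b1 w \<epsilon>
      - (of_real (a1^2/3) * w^2 + \<i> * of_real \<epsilon> * of_real b1 * w - 1))"
proof -
  have square_bounded: "uniform_bigo S 0 (\<lambda>\<epsilon> w. (of_real a1 * w) * (of_real a1 * w))"
    by (rule uniform_bigo_mult[OF uniform_bigo_linear[OF S(1)] uniform_bigo_linear[OF S(1)]]) simp
  have prefactor_bounded: "uniform_bigo S 0 (\<lambda>\<epsilon> w. 1 - of_real \<epsilon> * (\<i> * of_real b1 * w))"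
    by (intro uniform_bigo_diff uniform_bigo_const)
        (rule uniform_bigo_mono[OF uniform_bigo_mult[OF uniform_bigo_eps
        uniform_bigo_linear[OF S(1)]]], auto)
  have "uniform_bigo S 2
      (\<lambda>\<epsilon> w. (of_real a1 * w) * (of_real a1 * w) * (j1_over_z (of_real \<epsilon> * of_real a1 * w) - 1/3)
        - (1 - of_real \<epsilon> * (\<i> * of_real b1 * w)) * (sph_j (of_real \<epsilon> * of_real a1 * w) - 1))"
    by (intro uniform_bigo_diff uniform_bigo_mult[OF square_bounded uniform_bigo_j1_over_z[OF S a]]
        uniform_bigo_mult[OF prefactor_bounded uniform_bigo_sph_j[OF S a]]) auto
  then show ?thesis
    by (rule uniform_bigo_cong) (simp add: reduced_det_ball_def algebra_simps power2_eq_square)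
qed

lemma uniform_bigo_inner_minor_W:
  assumes S: "bounded S" "0 \<notin> S" and a: "a2 \<noteq> 0" "b2 \<noteq> 0"
  shows "uniform_bigo S 2 (\<lambda>\<epsilon> w. inner_minor_W a2 b2 \<tau> w \<epsilon> - 1)"
proof -
  have q_bounded: "uniform_bigo S 0 (\<lambda>\<epsilon> w. cos_plus_z_sin (of_real \<epsilon> * of_real a2 * w))"
    by (rule uniform_bigo_0_of_diff[OF uniform_bigo_cos_plus_z_sin[OF S a(1)] uniform_bigo_const])
  have p_bounded: "uniform_bigo S 0 (\<lambda>\<epsilon> w. j1_over_z (of_real \<epsilon> * of_real b2 * w))"
    by (rule uniform_bigo_0_of_diff[OF uniform_bigo_j1_over_z[OF S a(2)] uniform_bigo_const])
  have tail_bounded: "uniform_bigo S 0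
      (\<lambda>\<epsilon> w. (of_real a2 * w) * (of_real a2 * w) * cos (of_real \<epsilon> * of_real a2 * w)
      * j1_over_z (of_real \<epsilon> * of_real b2 * w) * (1 / of_real \<tau>^2))"
    by (intro uniform_bigo_mult[OF _ uniform_bigo_const] uniform_bigo_mult[OF _ p_bounded]
        uniform_bigo_mult[OF _ uniform_bigo_cos[OF S a(1)]]
        uniform_bigo_mult[OF uniform_bigo_linear[OF S(1)] uniform_bigo_linear[OF S(1)]]) auto
  have sinc_term: "uniform_bigo S 2
      (\<lambda>\<epsilon> w. (sph_j (of_real \<epsilon> * of_real b2 * w) - 1)
      * cos_plus_z_sin (of_real \<epsilon> * of_real a2 * w))"
    by (rule uniform_bigo_mult[OF uniform_bigo_sph_j[OF S a(2)] q_bounded]) simp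
  have tail_term: "uniform_bigo S 2
      (\<lambda>\<epsilon> w. of_real \<epsilon> ^ 4
      * ((of_real a2 * w) * (of_real a2 * w) * cos (of_real \<epsilon> * of_real a2 * w)
      * j1_over_z (of_real \<epsilon> * of_real b2 * w) * (1 / of_real \<tau>^2)))"
    by (rule uniform_bigo_mono[OF uniform_bigo_mult[OF uniform_bigo_eps_power tail_bounded]]) auto
  have "uniform_bigo S 2
      (\<lambda>\<epsilon> w. (sph_j (of_real \<epsilon> * of_real b2 * w) - 1) * cos_plus_z_sin (of_real \<epsilon> * of_real a2 * w)
      + (cos_plus_z_sin (of_real \<epsilon> * of_real a2 * w) - 1)
          - of_real \<epsilon> ^ 4
              * ((of_real a2 * w) * (of_real a2 * w) * cos (of_real \<epsilon> * of_real a2 * w)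
              * j1_over_z (of_real \<epsilon> * of_real b2 * w) * (1 / of_real \<tau>^2)))"
    by (rule uniform_bigo_diff[OF uniform_bigo_add[OF sinc_term
        uniform_bigo_cos_plus_z_sin[OF S a(1)]] tail_term])
  then show ?thesis by (rule uniform_bigo_cong)
      (simp add: inner_minor_W_def algebra_simps power2_eq_square)
qed

lemma uniform_bigo_inner_minor_V:
  assumes S: "bounded S" "0 \<notin> S" and a: "a2 \<noteq> 0" "b2 \<noteq> 0"
  shows "uniform_bigo S 2 (\<lambda>\<epsilon> w. inner_minor_V a2 b2 \<tau> w \<epsilon> - (of_real a2 * w)^3 / 3)"
proof -
  have p_bounded: "uniform_bigo S 0 (\<lambda>\<epsilon> w. j1_over_z (of_real \<epsilon> * of_real b2 * w))"
    by (rule uniform_bigo_0_of_diff[OF uniform_bigo_j1_over_z[OF S a(2)] uniform_bigo_const])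
  have p_bounded': "uniform_bigo S 0 (\<lambda>\<epsilon> w. j1_over_z (of_real \<epsilon> * of_real a2 * w))"
    by (rule uniform_bigo_0_of_diff[OF uniform_bigo_j1_over_z[OF S a(1)] uniform_bigo_const])
  have sinc_bounded: "uniform_bigo S 0 (\<lambda>\<epsilon> w. sph_j (of_real \<epsilon> * of_real a2 * w))"
    by (rule uniform_bigo_0_of_diff[OF uniform_bigo_sph_j[OF S a(1)] uniform_bigo_const])
  have cube_bounded: "uniform_bigo S 0
      (\<lambda>\<epsilon> w. (of_real a2 * w) * (of_real a2 * w) * (of_real a2 * w))"
    by (intro uniform_bigo_mult[OF _ uniform_bigo_linear[OF S(1)]]
        uniform_bigo_mult[OF uniform_bigo_linear[OF S(1)] uniform_bigo_linear[OF S(1)]]) auto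
  have tail_bounded: "uniform_bigo S 0
      (\<lambda>\<epsilon> w. (of_real a2 * w) * (of_real a2 * w) * (of_real b2 * w)
      * sph_j (of_real \<epsilon> * of_real a2 * w) * j1_over_z (of_real \<epsilon> * of_real b2 * w)
      * (1 / of_real \<tau>))"
    by (intro uniform_bigo_mult[OF _ uniform_bigo_const] uniform_bigo_mult[OF _ p_bounded]
        uniform_bigo_mult[OF _ sinc_bounded] uniform_bigo_mult[OF _ uniform_bigo_linear[OF S(1)]]
        uniform_bigo_mult[OF uniform_bigo_linear[OF S(1)] uniform_bigo_linear[OF S(1)]]) auto
  have sinc_term: "uniform_bigo S 2
      (\<lambda>\<epsilon> w. (sph_j (of_real \<epsilon> * of_real b2 * w) - 1) * j1_over_z (of_real \<epsilon> * of_real a2 * w))"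
    by (rule uniform_bigo_mult[OF uniform_bigo_sph_j[OF S a(2)] p_bounded']) simp
  have main_factor: "uniform_bigo S 2
      (\<lambda>\<epsilon> w. (sph_j (of_real \<epsilon> * of_real b2 * w) - 1) * j1_over_z (of_real \<epsilon> * of_real a2 * w)
      + (j1_over_z (of_real \<epsilon> * of_real a2 * w) - 1/3))"
    by (rule uniform_bigo_add[OF sinc_term uniform_bigo_j1_over_z[OF S a(1)]])
  have main_term: "uniform_bigo S 2 (\<lambda>\<epsilon> w. (of_real a2 * w) * (of_real a2 * w) * (of_real a2 * w) *
            ((sph_j (of_real \<epsilon> * of_real b2 * w) - 1) * j1_over_z (of_real \<epsilon> * of_real a2 * w)
                + (j1_over_z (of_real \<epsilon> * of_real a2 * w) - 1/3)))"
    by (rule uniform_bigo_mult[OF cube_bounded main_factor]) simp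
  have tail_term: "uniform_bigo S 2
      (\<lambda>\<epsilon> w. of_real \<epsilon> ^ 2
      * ((of_real a2 * w) * (of_real a2 * w) * (of_real b2 * w) * sph_j (of_real \<epsilon> * of_real a2 * w)
      * j1_over_z (of_real \<epsilon> * of_real b2 * w) * (1 / of_real \<tau>)))"
    by (rule uniform_bigo_mult[OF uniform_bigo_eps_power tail_bounded]) simp
  have "uniform_bigo S 2 (\<lambda>\<epsilon> w. (of_real a2 * w) * (of_real a2 * w) * (of_real a2 * w) *
            ((sph_j (of_real \<epsilon> * of_real b2 * w) - 1) * j1_over_z (of_real \<epsilon> * of_real a2 * w)
                + (j1_over_z (of_real \<epsilon> * of_real a2 * w) - 1/3))
          - of_real \<epsilon> ^ 2
              * ((of_real a2 * w) * (of_real a2 * w) * (of_real b2 * w)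
              * sph_j (of_real \<epsilon> * of_real a2 * w) * j1_over_z (of_real \<epsilon> * of_real b2 * w)
              * (1 / of_real \<tau>)))"
    by (rule uniform_bigo_diff[OF main_term tail_term])
  then show ?thesis by (rule uniform_bigo_cong)
      (simp add: inner_minor_V_def algebra_simps power2_eq_square power3_eq_cube)
qed

lemma uniform_bigo_reduced_det_shell:
  assumes S: "bounded S" "0 \<notin> S" and m: "\<And>w. w \<in> S \<Longrightarrow> m \<le> norm w" "0 < m"
    and a: "a1 \<noteq> 0" "a2 \<noteq> 0" "b2 \<noteq> 0"
  shows "uniform_bigo S 2
      (\<lambda>\<epsilon> w. reduced_det_shell a1 a2 b1 b2 \<tau> w \<epsilon>
      - (of_real ((a1^3 - a2^3) / (3 * a1)) * w^2 + \<i> * of_real \<epsilon> * of_real b1 * w - 1))"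
proof -
  have W_bounded: "uniform_bigo S 0 (\<lambda>\<epsilon> w. inner_minor_W a2 b2 \<tau> w \<epsilon>)"
    by (rule uniform_bigo_0_of_diff[OF uniform_bigo_inner_minor_W[OF S a(2,3)] uniform_bigo_const])
  have cube_bounded: "uniform_bigo S 0 (\<lambda>\<epsilon> w. (of_real a2 * w)^3 / 3)"
    by (rule uniform_bigo_cong[OF uniform_bigo_mult[OF uniform_bigo_mult[OF uniform_bigo_mult[OF uniform_bigo_linear[OF S(1)] uniform_bigo_linear[OF S(1)]] uniform_bigo_linear[OF S(1)]] uniform_bigo_const[of S "1/3"]]])
       (auto simp: power3_eq_cube)
  have V_bounded: "uniform_bigo S 0 (\<lambda>\<epsilon> w. inner_minor_V a2 b2 \<tau> w \<epsilon>)"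
    by (rule uniform_bigo_0_of_diff[OF uniform_bigo_inner_minor_V[OF S a(2,3)] cube_bounded])
  have inverse_bounded: "uniform_bigo S 0 (\<lambda>\<epsilon> w. 1 / (of_real a1 * w))"
    using a m by (intro uniform_bigo_inverse_linear[OF m]) auto
  have square_bounded: "uniform_bigo S 0 (\<lambda>\<epsilon> w. (of_real a1 * w) * (of_real a1 * w))"
    by (rule uniform_bigo_mult[OF uniform_bigo_linear[OF S(1)] uniform_bigo_linear[OF S(1)]]) simp
  have prefactor_bounded: "uniform_bigo S 0 (\<lambda>\<epsilon> w. 1 - of_real \<epsilon> * (\<i> * of_real b1 * w))"
    by (intro uniform_bigo_diff uniform_bigo_const)
        (rule uniform_bigo_mono[OF uniform_bigo_mult[OF uniform_bigo_eps
        uniform_bigo_linear[OF S(1)]]], auto)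
  have W_approx: "uniform_bigo S 2 (\<lambda>\<epsilon> w. inner_minor_W a2 b2 \<tau> w \<epsilon> - 1)"
    by (rule uniform_bigo_inner_minor_W[OF S a(2,3)])
  have V_approx: "uniform_bigo S 2 (\<lambda>\<epsilon> w. inner_minor_V a2 b2 \<tau> w \<epsilon> - (of_real a2 * w)^3 / 3)"
    by (rule uniform_bigo_inner_minor_V[OF S a(2,3)])
  have p_term: "uniform_bigo S 2
      (\<lambda>\<epsilon> w. (j1_over_z (of_real \<epsilon> * of_real a1 * w) - 1/3) * inner_minor_W a2 b2 \<tau> w \<epsilon>)"
    by (rule uniform_bigo_mult[OF uniform_bigo_j1_over_z[OF S a(1)] W_bounded]) simp
  have first_term: "uniform_bigo S 2
      (\<lambda>\<epsilon> w. (of_real a1 * w) * (of_real a1 * w)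
      * ((j1_over_z (of_real \<epsilon> * of_real a1 * w) - 1/3) * inner_minor_W a2 b2 \<tau> w \<epsilon> + (1/3)
      * (inner_minor_W a2 b2 \<tau> w \<epsilon> - 1)))"
    by (rule uniform_bigo_mult[OF square_bounded
        uniform_bigo_add[OF p_term uniform_bigo_cmult[OF W_approx]]]) simp
  have q_term: "uniform_bigo S 2
      (\<lambda>\<epsilon> w. (cos_plus_z_sin (of_real \<epsilon> * of_real a1 * w) - 1) * inner_minor_V a2 b2 \<tau> w \<epsilon>)"
    by (rule uniform_bigo_mult[OF uniform_bigo_cos_plus_z_sin[OF S a(1)] V_bounded]) simp
  have second_term: "uniform_bigo S 2
      (\<lambda>\<epsilon> w.
      ((cos_plus_z_sin (of_real \<epsilon> * of_real a1 * w) - 1) * inner_minor_V a2 b2 \<tau> w \<epsilon>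
      + (inner_minor_V a2 b2 \<tau> w \<epsilon> - (of_real a2 * w)^3 / 3)) * (1 / (of_real a1 * w)))"
    by (rule uniform_bigo_mult[OF uniform_bigo_add[OF q_term V_approx] inverse_bounded]) simp
  have sinc_term: "uniform_bigo S 2
      (\<lambda>\<epsilon> w. (sph_j (of_real \<epsilon> * of_real a1 * w) - 1) * inner_minor_W a2 b2 \<tau> w \<epsilon>)"
    by (rule uniform_bigo_mult[OF uniform_bigo_sph_j[OF S a(1)] W_bounded]) simp
  have cos_V_bounded: "uniform_bigo S 0
      (\<lambda>\<epsilon> w. cos (of_real \<epsilon> * of_real a1 * w) * inner_minor_V a2 b2 \<tau> w \<epsilon> * (1 / (of_real a1 * w)))"
    by (rule uniform_bigo_mult[OF uniform_bigo_mult[OF uniform_bigo_cos[OF S a(1)] V_bounded]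
        inverse_bounded]) simp_all
  have cos_V_term: "uniform_bigo S 2
      (\<lambda>\<epsilon> w. of_real \<epsilon> ^ 2
      * (cos (of_real \<epsilon> * of_real a1 * w) * inner_minor_V a2 b2 \<tau> w \<epsilon> * (1 / (of_real a1 * w))))"
    by (rule uniform_bigo_mult[OF uniform_bigo_eps_power cos_V_bounded]) simp
  have third_term: "uniform_bigo S 2
      (\<lambda>\<epsilon> w. (1 - of_real \<epsilon> * (\<i> * of_real b1 * w))
      * ((sph_j (of_real \<epsilon> * of_real a1 * w) - 1) * inner_minor_W a2 b2 \<tau> w \<epsilon>
      + (inner_minor_W a2 b2 \<tau> w \<epsilon> - 1)
          - of_real \<epsilon> ^ 2
              * (cos (of_real \<epsilon> * of_real a1 * w) * inner_minor_V a2 b2 \<tau> w \<epsilon>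
              * (1 / (of_real a1 * w)))))"
    by (rule uniform_bigo_mult[OF prefactor_bounded
        uniform_bigo_diff[OF uniform_bigo_add[OF sinc_term W_approx] cos_V_term]]) simp
  have "uniform_bigo S 2
      (\<lambda>\<epsilon> w. (of_real a1 * w) * (of_real a1 * w)
      * ((j1_over_z (of_real \<epsilon> * of_real a1 * w) - 1/3) * inner_minor_W a2 b2 \<tau> w \<epsilon> + (1/3)
      * (inner_minor_W a2 b2 \<tau> w \<epsilon> - 1))
     - ((cos_plus_z_sin (of_real \<epsilon> * of_real a1 * w) - 1) * inner_minor_V a2 b2 \<tau> w \<epsilon>
         + (inner_minor_V a2 b2 \<tau> w \<epsilon> - (of_real a2 * w)^3 / 3)) * (1 / (of_real a1 * w))
     - (1 - of_real \<epsilon> * (\<i> * of_real b1 * w))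
         * ((sph_j (of_real \<epsilon> * of_real a1 * w) - 1) * inner_minor_W a2 b2 \<tau> w \<epsilon>
         + (inner_minor_W a2 b2 \<tau> w \<epsilon> - 1)
          - of_real \<epsilon> ^ 2
              * (cos (of_real \<epsilon> * of_real a1 * w) * inner_minor_V a2 b2 \<tau> w \<epsilon>
              * (1 / (of_real a1 * w)))))"
    by (intro uniform_bigo_diff first_term second_term third_term)
  then show ?thesis
  proof (rule uniform_bigo_cong, goal_cases)
    case (1 \<epsilon> w)
    then have "w \<noteq> 0"
      using S(2) by auto
    then show ?case
      using a by (simp add: reduced_det_shell_def field_simps power2_eq_square power3_eq_cube)
  qed
qed

section \<open>Roots of perturbed quadratics\<close>

lemma norm_deriv_le_of_norm_le:
  assumes "f holomorphic_on S" "cball z r \<subseteq> S" "0 < r" "\<And>x. x \<in> S \<Longrightarrow> norm (f x) \<le> B"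
  shows "norm (deriv f z) \<le> B / r"
proof -
  have "norm ((deriv ^^ 1) f z) \<le> fact 1 * B / r ^ 1"
  proof (rule Cauchy_inequality)
    show "f holomorphic_on ball z r"
      using assms(1,2) ball_subset_cball holomorphic_on_subset by blast
    show "continuous_on (cball z r) f"
      using assms(1,2) holomorphic_on_imp_continuous_on holomorphic_on_subset by blast
    show "norm (f x) \<le> B" if "norm (z - x) = r" for x
      using assms(2,4) that by (auto simp: dist_norm)
  qed (rule assms(3))
  then show ?thesis by simp
qed

definition chord_map :: "(complex \<Rightarrow> complex) \<Rightarrow> complex \<Rightarrow> complex \<Rightarrow> complex" where
  "chord_map F d w = w - F w / d"

lemma chord_map_fixed_iff: "d \<noteq> 0 \<Longrightarrow> chord_map F d w = w \<longleftrightarrow> F w = 0"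
  by (simp add: chord_map_def)

text \<open>The frozen slope \<open>2 \<alpha> c\<close> is the derivative of \<open>\<alpha> w\<^sup>2 - 1\<close> at its root \<open>c\<close>; the Cauchy
  inequality turns the sup-bound on the perturbation into a bound on its derivative.\<close>

lemma chord_map_lipschitz:
  fixes F :: "complex \<Rightarrow> complex" and b :: complex
  assumes "0 < \<alpha>" "0 < c" "0 < R" "\<rho> \<le> c / 4" "\<rho> \<le> R / 4"
    and hol: "F holomorphic_on ball (of_real c) R"
    and approx: "\<And>w. w \<in> ball (of_real c) R \<Longrightarrow> norm (F w - (of_real \<alpha> * w\<^sup>2 + b * w - 1)) \<le> K"
    and small: "norm b + 2 * K / R \<le> \<alpha> * c / 2"
    and w: "w1 \<in> cball (of_real c) \<rho>" "w2 \<in> cball (of_real c) \<rho>"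
  shows "norm (chord_map F (of_real (2 * \<alpha> * c)) w1 - chord_map F (of_real (2 * \<alpha> * c)) w2)
           \<le> 1/2 * norm (w1 - w2)"
proof -
  define c' where "c' = complex_of_real c"
  define d where "d = complex_of_real (2 * \<alpha> * c)"
  define E where "E w = F w - (of_real \<alpha> * w\<^sup>2 + b * w - 1)" for w
  have d: "d \<noteq> 0" "norm d = 2 * \<alpha> * c"
    using assms(1,2) by (simp_all add: d_def norm_mult)
  have holE: "E holomorphic_on ball c' R"
    unfolding E_def c'_def by (intro holomorphic_intros hol)
  have sub: "cball z (R/2) \<subseteq> ball c' R" if "z \<in> cball c' \<rho>" for z
  proof
    fix x assume "x \<in> cball z (R/2)"
    then show "x \<in> ball c' R"
      using that dist_triangle[of c' x z] assms(3,5) by simp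
  qed
  have dE: "norm (deriv E z) \<le> 2 * K / R" if "z \<in> cball c' \<rho>" for z
    using norm_deriv_le_of_norm_le[OF holE sub[OF that], of K] approx assms(3)
    by (simp add: E_def c'_def mult.commute)
  have der: "(chord_map F d has_field_derivative 1 - (2 * of_real \<alpha> * z + b + deriv E z) / d)
               (at z within cball c' \<rho>)" if "z \<in> cball c' \<rho>" for z
  proof -
    have "z \<in> cball z (R/2)"
      using assms(3) by simp
    then have "z \<in> ball c' R"
      using sub[OF that] by blast
    then have dE: "(E has_field_derivative deriv E z) (at z)"
      using holE by (intro holomorphic_derivI[of _ "ball c' R"]) auto
    have dP: "((\<lambda>w. of_real \<alpha> * w\<^sup>2 + b * w - 1) has_field_derivative 2 * of_real \<alpha> * z + b) (at z)"
      by (auto intro!: derivative_eq_intros simp: power2_eq_square)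
    have "chord_map F d = (\<lambda>w. w - ((of_real \<alpha> * w\<^sup>2 + b * w - 1) + E w) / d)"
      by (auto simp: chord_map_def E_def)
    then show ?thesis
      using DERIV_diff[OF DERIV_ident DERIV_cdivide[OF DERIV_add[OF dP dE], of d]]
      by (auto intro: has_field_derivative_at_within)
  qed
  have der_bound: "norm (1 - (2 * of_real \<alpha> * z + b + deriv E z) / d) \<le> 1/2"
    if z: "z \<in> cball c' \<rho>" for z
  proof -
    have "norm ((c' - z) / c') \<le> 1/4"
      using z assms(2,4) by (simp add: c'_def norm_divide dist_norm divide_le_eq)
    moreover have "norm (b + deriv E z) \<le> \<alpha> * c / 2"
      using norm_triangle_ineq[of b "deriv E z"] dE[OF z] small by linarith
    then have "norm ((b + deriv E z) / d) \<le> 1/4"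
      using d assms(1,2) by (simp add: norm_divide divide_le_eq)
    moreover have "1 - (2 * of_real \<alpha> * z + b + deriv E z) / d = (c' - z) / c' - (b + deriv E z)
        / d"
      using assms(1,2) by (simp add: c'_def d_def field_simps)
    ultimately show ?thesis
      using norm_triangle_ineq4[of "(c' - z) / c'" "(b + deriv E z) / d"] by auto
  qed
  show ?thesis
    using field_differentiable_bound[OF convex_cball der der_bound] w unfolding c'_def d_def
    by blast
qed

lemma chord_map_centre:
  fixes F :: "complex \<Rightarrow> complex" and b :: complex
  assumes "0 < \<alpha>" "0 < c" "\<alpha> * c\<^sup>2 = 1"
    and approx: "norm (F (of_real c) - (of_real \<alpha> * (of_real c)\<^sup>2 + b * of_real c - 1)) \<le> K"
    and small: "norm b * c + K \<le> \<alpha> * c * \<rho>"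
  shows "norm (chord_map F (of_real (2 * \<alpha> * c)) (of_real c) - of_real c) \<le> \<rho> / 2"
proof -
  have "of_real \<alpha> * (of_real c)\<^sup>2 = (1 :: complex)"
    by (metis assms(3) of_real_1 of_real_mult of_real_power)
  then have "norm (F (of_real c)) \<le> norm b * c + K"
    using approx norm_triangle_ineq[of "b * of_real c" "F (of_real c) - b * of_real c"] assms(2)
    by (simp add: norm_mult)
  then have "norm (F (of_real c)) \<le> \<alpha> * c * \<rho>"
    using small by linarith
  moreover have "norm (chord_map F (of_real (2 * \<alpha> * c)) (of_real c) - of_real c)
      = norm (F (of_real c)) / (2 * \<alpha> * c)"
    using assms(1,2) by (simp add: chord_map_def norm_divide norm_mult)
  ultimately show ?thesis
    using assms(1,2) by (simp add: divide_le_eq mult_ac)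
qed

lemma continuous_on_fixed_point:
  fixes T :: "'a::metric_space \<Rightarrow> 'b::metric_space \<Rightarrow> 'b"
  assumes fixed: "\<And>t. t \<in> I \<Longrightarrow> W t \<in> S \<and> T t (W t) = W t"
    and lipschitz: "\<And>t x y. t \<in> I \<Longrightarrow> x \<in> S \<Longrightarrow> y \<in> S \<Longrightarrow> dist (T t x) (T t y) \<le> L * dist x y"
    and "L < 1"
    and cont: "\<And>x. x \<in> S \<Longrightarrow> continuous_on I (\<lambda>t. T t x)"
  shows "continuous_on I W"
  unfolding continuous_on_iff
proof (intro ballI allI impI)
  fix t and \<eta> :: real
  assume t: "t \<in> I" and "0 < \<eta>"
  then have "0 < \<eta> * (1 - L)" using \<open>L < 1\<close> by simp
  then obtain d where "0 < d"
    and d: "\<And>t'. t' \<in> I \<Longrightarrow> dist t' t < d \<Longrightarrow> dist (T t' (W t)) (T t (W t)) < \<eta> * (1 - L)"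
    using cont[of "W t"] fixed[OF t] t unfolding continuous_on_iff by metis
  show "\<exists>d>0. \<forall>t'\<in>I. dist t' t < d \<longrightarrow> dist (W t') (W t) < \<eta>"
  proof (intro exI[of _ d] conjI ballI impI \<open>0 < d\<close>)
    fix t' assume t': "t' \<in> I" "dist t' t < d"
    have "dist (W t') (W t) \<le> dist (T t' (W t')) (T t' (W t)) + dist (T t' (W t)) (T t (W t))"
      using fixed[OF t] fixed[OF t'(1)] dist_triangle by metis
    also have "\<dots> \<le> L * dist (W t') (W t) + dist (T t' (W t)) (T t (W t))"
      using lipschitz[OF t'(1)] fixed[OF t] fixed[OF t'(1)] by (intro add_right_mono) blast
    finally have "(1 - L) * dist (W t') (W t) < \<eta> * (1 - L)"
      using d[OF t'] by (simp add: algebra_simps)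
    then show "dist (W t') (W t) < \<eta>"
      using \<open>L < 1\<close> by (simp add: mult.commute)
  qed
qed

lemma perturbed_quadratic_root_estimate:
  fixes w :: complex
  assumes "0 < \<alpha>" "0 < c" "\<alpha> * c\<^sup>2 = 1" "0 < Re w"
    and approx: "norm (of_real \<alpha> * w\<^sup>2 + \<i> * of_real \<epsilon> * of_real \<beta> * w - 1) \<le> K * \<epsilon>\<^sup>2"
  shows "norm (w - (of_real c - \<i> * of_real \<epsilon> * of_real \<beta> / of_real (2 * \<alpha>)))
           \<le> (K + \<beta>\<^sup>2 / (4 * \<alpha>)) / (\<alpha> * c) * \<epsilon>\<^sup>2"
proof -
  define c' where "c' = complex_of_real c"
  define u where "u = w + \<i> * of_real \<epsilon> * of_real \<beta> / of_real (2 * \<alpha>)"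
  have "of_real \<alpha> * c'\<^sup>2 = (1::complex)"
    unfolding c'_def by (metis assms(3) of_real_1 of_real_mult of_real_power)
  then have factor: "of_real \<alpha> * ((u - c') * (u + c'))
      = (of_real \<alpha> * w\<^sup>2 + \<i> * of_real \<epsilon> * of_real \<beta> * w - 1) - of_real (\<epsilon>\<^sup>2 * \<beta>\<^sup>2 / (4 * \<alpha>))"
    unfolding u_def using assms(1) by (simp add: field_simps power2_eq_square)
  have c_le: "c \<le> norm (u + c')"
    using complex_Re_le_cmod[of "u + c'"] assms(4) by (simp add: u_def c'_def)
  have "\<alpha> * c * norm (u - c') \<le> \<alpha> * (norm (u - c') * norm (u + c'))"
    using mult_left_mono[OF mult_right_mono[OF c_le norm_ge_zero[of "u - c'"]], of \<alpha>] assms(1)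
    by (simp add: mult_ac)
  also have "\<dots> = norm (of_real \<alpha> * ((u - c') * (u + c')))"
    using assms(1) by (simp add: norm_mult)
  also have "\<dots> \<le> K * \<epsilon>\<^sup>2 + \<epsilon>\<^sup>2 * \<beta>\<^sup>2 / (4 * \<alpha>)"
    unfolding factor using norm_triangle_ineq4 approx assms(1)
    by (smt (verit, best) norm_of_real zero_le_divide_iff zero_le_mult_iff zero_le_power2)
  finally have "norm (u - c') \<le> (K + \<beta>\<^sup>2 / (4 * \<alpha>)) * \<epsilon>\<^sup>2 / (\<alpha> * c)"
    using assms(1,2) by (simp add: le_divide_eq algebra_simps)
  then show ?thesis
    by (simp add: u_def c'_def algebra_simps)
qed

lemma chord_map_self_contraction:
  fixes F :: "complex \<Rightarrow> complex" and b :: complex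
  assumes "0 < \<alpha>" "0 < c" "\<alpha> * c\<^sup>2 = 1" "0 < R" "0 < \<rho>" "\<rho> \<le> c / 4" "\<rho> \<le> R / 4"
    and hol: "F holomorphic_on ball (of_real c) R"
    and approx: "\<And>w. w \<in> ball (of_real c) R \<Longrightarrow> norm (F w - (of_real \<alpha> * w\<^sup>2 + b * w - 1)) \<le> K"
    and "norm b + 2 * K / R \<le> \<alpha> * c / 2" "norm b * c + K \<le> \<alpha> * c * \<rho>"
  shows "\<exists>!w \<in> cball (of_real c) \<rho>. chord_map F (of_real (2 * \<alpha> * c)) w = w"
    and "\<And>x y. x \<in> cball (of_real c) \<rho> \<Longrightarrow> y \<in> cball (of_real c) \<rho> \<Longrightarrow>
           dist (chord_map F (of_real (2 * \<alpha> * c)) x) (chord_map F (of_real (2 * \<alpha> * c)) y)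
             \<le> 1/2 * dist x y"
proof -
  define T where "T = chord_map F (of_real (2 * \<alpha> * c))"
  have centre: "of_real c \<in> cball (of_real c) \<rho>" "of_real c \<in> ball (of_real c) R"
    using assms(4,5) by simp_all
  show lip: "dist (T x) (T y) \<le> 1/2 * dist x y"
    if "x \<in> cball (of_real c) \<rho>" "y \<in> cball (of_real c) \<rho>" for x y
    using chord_map_lipschitz[where F = F and b = b, OF assms(1,2,4,6,7) hol approx assms(10) that]
    unfolding T_def dist_norm .
  have centre_step: "dist (of_real c) (T (of_real c)) \<le> \<rho> / 2"
    using chord_map_centre[where F = F and b = b, OF assms(1-3) approx[OF centre(2)] assms(11)]
    unfolding T_def dist_norm by (simp only: norm_minus_commute)
  have into: "T w \<in> cball (of_real c) \<rho>" if w: "w \<in> cball (of_real c) \<rho>" for w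
  proof -
    have "dist (T (of_real c)) (T w) \<le> \<rho> / 2"
      using lip[OF centre(1) w] w by (simp add: dist_commute)
    then show ?thesis
      using dist_triangle[of "of_real c" "T w" "T (of_real c)"] centre_step by simp
  qed
  have "\<exists>!w \<in> cball (of_real c) \<rho>. T w = w"
  proof (rule Banach_fix[of _ "1/2"])
    show "complete (cball (of_real c :: complex) \<rho>)"
      by (simp add: complete_eq_closed)
    show "cball (of_real c) \<rho> \<noteq> {}"
      using centre(1) by blast
    show "T ` cball (of_real c) \<rho> \<subseteq> cball (of_real c) \<rho>"
      using into by blast
    show "dist (T x) (T y) \<le> 1/2 * dist x y"
      if "x \<in> cball (of_real c) \<rho>" "y \<in> cball (of_real c) \<rho>" for x y
      using lip[OF that] .
  qed simp_all
  then show "\<exists>!w \<in> cball (of_real c) \<rho>. chord_map F (of_real (2 * \<alpha> * c)) w = w"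
    unfolding T_def .
qed

lemma eventually_linear_quadratic_less:
  fixes a b A :: real
  assumes "0 < A"
  shows "\<forall>\<^sub>F \<epsilon> in at_right 0. \<epsilon> * a + b * \<epsilon>\<^sup>2 < A"
proof (rule order_tendstoD(2))
  show "((\<lambda>\<epsilon>. \<epsilon> * a + b * \<epsilon>\<^sup>2) \<longlongrightarrow> 0) (at_right 0)"
    by (auto intro!: tendsto_eq_intros)
qed (rule assms)

lemma perturbed_quadratic_root:
  fixes F :: "complex \<Rightarrow> real \<Rightarrow> complex" and \<alpha> \<beta> c R :: real
  assumes "0 < \<alpha>" "0 < c" "\<alpha> * c\<^sup>2 = 1" "0 < R"
    and hol: "\<And>\<epsilon>. 0 < \<epsilon> \<Longrightarrow> (\<lambda>w. F w \<epsilon>) holomorphic_on ball (of_real c) R"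
    and cont: "\<And>w. w \<in> ball (of_real c) R \<Longrightarrow> continuous_on {0<..} (F w)"
    and approx: "uniform_bigo (ball (of_real c) R) 2
                   (\<lambda>\<epsilon> w. F w \<epsilon> - (of_real \<alpha> * w\<^sup>2 + \<i> * of_real \<epsilon> * of_real \<beta> * w - 1))"
  obtains e K W where "0 < e" "continuous_on {0<..<e} W"
    and "\<And>\<epsilon>. 0 < \<epsilon> \<Longrightarrow> \<epsilon> < e \<Longrightarrow> 0 < Re (W \<epsilon>) \<and> F (W \<epsilon>) \<epsilon> = 0"
    and "\<And>\<epsilon>. 0 < \<epsilon> \<Longrightarrow> \<epsilon> < e \<Longrightarrow>
           norm (W \<epsilon> - (of_real c - \<i> * of_real \<epsilon> * of_real \<beta> / of_real (2 * \<alpha>))) \<le> K * \<epsilon>\<^sup>2"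
proof -
  obtain K e1 where "0 < e1" "0 \<le> K"
    and bound: "\<And>\<epsilon> w. 0 < \<epsilon> \<Longrightarrow> \<epsilon> < e1 \<Longrightarrow> w \<in> ball (of_real c) R \<Longrightarrow>
        norm (F w \<epsilon> - (of_real \<alpha> * w\<^sup>2 + \<i> * of_real \<epsilon> * of_real \<beta> * w - 1)) \<le> K * \<epsilon> ^ 2"
    by (rule uniform_bigoE[OF approx]) (rule that; assumption)
  define \<rho> where "\<rho> = min (c / 4) (R / 4)"
  define c' where "c' = complex_of_real c"
  define T where "T \<epsilon> = chord_map (\<lambda>w. F w \<epsilon>) (of_real (2 * \<alpha> * c))" for \<epsilon>
  have \<rho>: "0 < \<rho>" "\<rho> \<le> c / 4" "\<rho> \<le> R / 4"
    using assms(2,4) by (auto simp: \<rho>_def)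
  have "\<forall>\<^sub>F \<epsilon> in at_right 0. \<epsilon> < e1 \<and> \<epsilon> * \<bar>\<beta>\<bar> + 2 * K / R * \<epsilon>\<^sup>2 < \<alpha> * c / 2
                              \<and> \<epsilon> * (\<bar>\<beta>\<bar> * c) + K * \<epsilon>\<^sup>2 < \<alpha> * c * \<rho>"
    using \<open>0 < e1\<close> assms(1,2) \<rho>(1)
    by (intro eventually_conj eventually_linear_quadratic_less)
       (auto simp: eventually_at_right_field)
  then obtain e where "0 < e" and small: "\<And>\<epsilon>. 0 < \<epsilon> \<Longrightarrow> \<epsilon> < e \<Longrightarrow> \<epsilon> < e1 \<and>
      \<epsilon> * \<bar>\<beta>\<bar> + 2 * K / R * \<epsilon>\<^sup>2 < \<alpha> * c / 2 \<and> \<epsilon> * (\<bar>\<beta>\<bar> * c) + K * \<epsilon>\<^sup>2 < \<alpha> * c * \<rho>"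
    unfolding eventually_at_right_field by blast
  have small_ball: "norm (\<i> * of_real \<epsilon> * of_real \<beta>) + 2 * (K * \<epsilon>\<^sup>2) / R \<le> \<alpha> * c / 2"
    and small_centre: "norm (\<i> * of_real \<epsilon> * of_real \<beta>) * c + K * \<epsilon>\<^sup>2 \<le> \<alpha> * c * \<rho>"
    if "0 < \<epsilon>" "\<epsilon> < e" for \<epsilon>
    using small[OF that] that by (simp_all add: norm_mult mult_ac)
  have contraction: "(\<exists>!w \<in> cball c' \<rho>. T \<epsilon> w = w)
      \<and> (\<forall>x \<in> cball c' \<rho>. \<forall>y \<in> cball c' \<rho>. dist (T \<epsilon> x) (T \<epsilon> y) \<le> 1/2 * dist x y)"
    if "0 < \<epsilon>" "\<epsilon> < e" for \<epsilon>
  proof -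
    have "norm (F w \<epsilon> - (of_real \<alpha> * w\<^sup>2 + (\<i> * of_real \<epsilon> * of_real \<beta>) * w - 1)) \<le> K * \<epsilon>\<^sup>2"
      if "w \<in> ball (of_real c) R" for w
      using bound[of \<epsilon> w] small[OF \<open>0 < \<epsilon>\<close> \<open>\<epsilon> < e\<close>] \<open>0 < \<epsilon>\<close> that by simp
    note self_contraction = chord_map_self_contraction[OF assms(1-4) \<rho> hol[OF that(1)] this
        small_ball[OF that] small_centre[OF that]]
    show ?thesis
      using self_contraction unfolding T_def c'_def by blast
  qed
  define W where "W \<epsilon> = (THE w. w \<in> cball c' \<rho> \<and> T \<epsilon> w = w)" for \<epsilon>
  have W: "W \<epsilon> \<in> cball c' \<rho> \<and> T \<epsilon> (W \<epsilon>) = W \<epsilon>" if "0 < \<epsilon>" "\<epsilon> < e" for \<epsilon>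
    unfolding W_def by (rule theI'[OF conjunct1[OF contraction[OF that]]])
  have W_ball: "W \<epsilon> \<in> ball c' R" if "0 < \<epsilon>" "\<epsilon> < e" for \<epsilon>
    using W[OF that] \<rho> assms(4) by (auto simp: dist_norm)
  have root: "F (W \<epsilon>) \<epsilon> = 0" if "0 < \<epsilon>" "\<epsilon> < e" for \<epsilon>
    using W[OF that] assms(1,2) by (simp add: T_def chord_map_fixed_iff)
  have Re_pos: "0 < Re (W \<epsilon>)" if "0 < \<epsilon>" "\<epsilon> < e" for \<epsilon>
  proof -
    have "\<bar>c - Re (W \<epsilon>)\<bar> \<le> \<rho>"
      using W[OF that] abs_Re_le_cmod[of "c' - W \<epsilon>"] by (simp add: c'_def dist_norm)
    then show ?thesis
      using \<rho> by linarith
  qed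
  show thesis
  proof
    show "continuous_on {0<..<e} W"
    proof (rule continuous_on_fixed_point[where T = T and S = "cball c' \<rho>" and L = "1/2"])
      show "W \<epsilon> \<in> cball c' \<rho> \<and> T \<epsilon> (W \<epsilon>) = W \<epsilon>" if "\<epsilon> \<in> {0<..<e}" for \<epsilon>
        using W that by simp
      show "dist (T \<epsilon> x) (T \<epsilon> y) \<le> 1/2 * dist x y"
        if "\<epsilon> \<in> {0<..<e}" "x \<in> cball c' \<rho>" "y \<in> cball c' \<rho>" for \<epsilon> x y
        using contraction that by simp
      show "continuous_on {0<..<e} (\<lambda>\<epsilon>. T \<epsilon> w)" if "w \<in> cball c' \<rho>" for w
      proof -
        have "w \<in> ball (of_real c) R"
          using that \<rho> assms(4) by (simp add: c'_def)
        then have "continuous_on {0<..<e} (F w)"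
          by (rule continuous_on_subset[OF cont]) auto
        then show ?thesis
          unfolding T_def chord_map_def using assms(1,2) by (intro continuous_intros) auto
      qed
    qed simp
    show "norm (W \<epsilon> - (of_real c - \<i> * of_real \<epsilon> * of_real \<beta> / of_real (2 * \<alpha>)))
            \<le> (K + \<beta>\<^sup>2 / (4 * \<alpha>)) / (\<alpha> * c) * \<epsilon>\<^sup>2" if "0 < \<epsilon>" "\<epsilon> < e" for \<epsilon>
    proof (rule perturbed_quadratic_root_estimate[OF assms(1-3) Re_pos[OF that]])
      have "norm (F (W \<epsilon>) \<epsilon> - (of_real \<alpha> * (W \<epsilon>)\<^sup>2 + \<i> * of_real \<epsilon> * of_real \<beta> * W \<epsilon> - 1))
          \<le> K * \<epsilon>\<^sup>2"
        using bound[of \<epsilon> "W \<epsilon>"] W_ball[OF that] small[OF that] that(1) by (simp add: c'_def)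
      then show "norm (of_real \<alpha> * (W \<epsilon>)\<^sup>2 + \<i> * of_real \<epsilon> * of_real \<beta> * W \<epsilon> - 1) \<le> K * \<epsilon>\<^sup>2"
        unfolding root[OF that] by (metis diff_0 norm_minus_cancel)
    qed
  qed (use \<open>0 < e\<close> Re_pos root in auto)
qed

lemma norm_gt_of_mem_half_ball:
  fixes w :: complex
  assumes "0 < c" "w \<in> ball (of_real c) (c / 2)"
  shows "c / 2 < norm w"
  using assms norm_triangle_ineq2[of "complex_of_real c" w] by (simp add: dist_norm)

lemma powr_three_halves:
  assumes "0 \<le> (x::real)"
  shows "x powr (3/2) = sqrt x ^ 3"
proof -
  have "x powr (3/2) = x powr (1 + 1/2)"
    by simp
  also have "\<dots> = x powr 1 * x powr (1/2)"
    by (rule powr_add)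
  also have "\<dots> = (sqrt x)\<^sup>2 * sqrt x"
    using assms by (simp add: powr_half_sqrt)
  finally show ?thesis
    by (simp add: power3_eq_cube power2_eq_square)
qed

lemma sqrt_rescaled_bigo:
  fixes W :: "real \<Rightarrow> complex"
  assumes "0 < \<alpha>" "0 < e"
    and approx: "\<And>s. 0 < s \<Longrightarrow> s < e \<Longrightarrow>
      norm (W s - (of_real c - \<i> * of_real s * of_real \<beta> / of_real (2 * \<alpha>))) \<le> K * s\<^sup>2"
  shows "(\<lambda>\<delta>. of_real (sqrt \<delta>) * W (sqrt \<delta>)
            - (of_real (c * \<delta> powr (1/2)) - \<i> * of_real (\<beta> / (2 * \<alpha>) * \<delta>)))
         \<in> O[at_right 0](\<lambda>\<delta>. of_real (\<delta> powr (3/2)))"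
proof (rule bigoI[of _ K])
  have "norm (of_real (sqrt \<delta>) * W (sqrt \<delta>)
          - (of_real (c * \<delta> powr (1/2)) - \<i> * of_real (\<beta> / (2 * \<alpha>) * \<delta>)))
        \<le> K * norm (complex_of_real (\<delta> powr (3/2)))" if "0 < \<delta>" "\<delta> < e\<^sup>2" for \<delta>
  proof -
    define s where "s = sqrt \<delta>"
    have s: "0 < s" "s < e" "\<delta> = s\<^sup>2"
      using that \<open>0 < e\<close> real_sqrt_less_iff[of \<delta> "e\<^sup>2"] by (auto simp: s_def)
    have p12: "\<delta> powr (1/2) = s"
      using that by (simp add: s_def powr_half_sqrt)
    have p32: "\<delta> powr (3/2) = s ^ 3"
      using powr_three_halves[of \<delta>] that by (simp add: s_def)
    have "of_real s * W s - (of_real (c * \<delta> powr (1/2)) - \<i> * of_real (\<beta> / (2 * \<alpha>) * \<delta>))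
        = of_real s * (W s - (of_real c - \<i> * of_real s * of_real \<beta> / of_real (2 * \<alpha>)))"
      using assms(1) s(3) p12 by (simp add: field_simps power2_eq_square)
    moreover have "s * norm (W s - (of_real c - \<i> * of_real s * of_real \<beta> / of_real (2 * \<alpha>)))
        \<le> s * (K * s\<^sup>2)"
      using approx[OF s(1,2)] s(1) by (intro mult_left_mono) auto
    ultimately show ?thesis
      using p32 s(1)
      by (simp add: s_def[symmetric] norm_mult power2_eq_square power3_eq_cube mult_ac)
  qed
  then show "\<forall>\<^sub>F \<delta> in at_right 0.
      norm (of_real (sqrt \<delta>) * W (sqrt \<delta>)
        - (of_real (c * \<delta> powr (1/2)) - \<i> * of_real (\<beta> / (2 * \<alpha>) * \<delta>)))
      \<le> K * norm (complex_of_real (\<delta> powr (3/2)))"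
    unfolding eventually_at_right_field using \<open>0 < e\<close> by (intro exI[of _ "e\<^sup>2"]) auto
qed

lemma resonance_from_reduced_equation:
  fixes F D :: "complex \<Rightarrow> real \<Rightarrow> complex" and \<alpha> \<beta> c :: real
  assumes "0 < \<alpha>" "0 < c" "\<alpha> * c\<^sup>2 = 1"
    and hol: "\<And>\<epsilon>. 0 < \<epsilon> \<Longrightarrow> (\<lambda>w. F w \<epsilon>) holomorphic_on - {0}"
    and cont: "\<And>w. w \<noteq> 0 \<Longrightarrow> continuous_on {0<..} (F w)"
    and approx: "uniform_bigo (ball (of_real c) (c / 2)) 2
                   (\<lambda>\<epsilon> w. F w \<epsilon> - (of_real \<alpha> * w\<^sup>2 + \<i> * of_real \<epsilon> * of_real \<beta> * w - 1))"
    and root: "\<And>\<epsilon> w. 0 < \<epsilon> \<Longrightarrow> w \<noteq> 0 \<Longrightarrow> F w \<epsilon> = 0 \<Longrightarrow> D (of_real \<epsilon> * w) (\<epsilon>\<^sup>2) = 0"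
  shows "\<exists>\<delta>0 > 0. \<exists>\<omega> :: real \<Rightarrow> complex.
           continuous_on {0<..<\<delta>0} \<omega> \<and>
           (\<forall>\<delta> \<in> {0<..<\<delta>0}. Re (\<omega> \<delta>) > 0 \<and> D (\<omega> \<delta>) \<delta> = 0) \<and>
           (\<lambda>\<delta>. \<omega> \<delta> - (of_real (c * \<delta> powr (1/2)) - \<i> * of_real (\<beta> / (2 * \<alpha>) * \<delta>)))
             \<in> O[at_right 0](\<lambda>\<delta>. of_real (\<delta> powr (3/2)))"
proof -
  have ball_nonzero: "ball (complex_of_real c) (c / 2) \<subseteq> - {0}"
    using norm_gt_of_mem_half_ball[OF assms(2)] assms(2) by force
  obtain e K W where "0 < e" and cont_W: "continuous_on {0<..<e} W"
    and W: "\<And>\<epsilon>. 0 < \<epsilon> \<Longrightarrow> \<epsilon> < e \<Longrightarrow> 0 < Re (W \<epsilon>) \<and> F (W \<epsilon>) \<epsilon> = 0"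
    and W_approx: "\<And>\<epsilon>. 0 < \<epsilon> \<Longrightarrow> \<epsilon> < e \<Longrightarrow>
        norm (W \<epsilon> - (of_real c - \<i> * of_real \<epsilon> * of_real \<beta> / of_real (2 * \<alpha>))) \<le> K * \<epsilon>\<^sup>2"
  proof (rule perturbed_quadratic_root[OF assms(1-3) _ _ _ approx])
    show "0 < c / 2" using assms(2) by simp
    show "(\<lambda>w. F w \<epsilon>) holomorphic_on ball (of_real c) (c / 2)" if "0 < \<epsilon>" for \<epsilon>
      using holomorphic_on_subset[OF hol[OF that] ball_nonzero] .
    show "continuous_on {0<..} (F w)" if "w \<in> ball (of_real c) (c / 2)" for w
      using cont ball_nonzero that by blast
  qed blast
  define \<omega> where "\<omega> \<delta> = of_real (sqrt \<delta>) * W (sqrt \<delta>)" for \<delta>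
  have sqrt_in: "sqrt \<delta> \<in> {0<..<e}" if "\<delta> \<in> {0<..<e\<^sup>2}" for \<delta>
    using that \<open>0 < e\<close> real_sqrt_less_iff[of \<delta> "e\<^sup>2"] by simp
  have "continuous_on {0<..<e\<^sup>2} \<omega>"
    unfolding \<omega>_def
    by (intro continuous_intros continuous_on_compose2[OF cont_W continuous_on_real_sqrt])
       (use sqrt_in in auto)
  moreover have "0 < Re (\<omega> \<delta>) \<and> D (\<omega> \<delta>) \<delta> = 0" if "\<delta> \<in> {0<..<e\<^sup>2}" for \<delta>
  proof -
    have Re: "0 < Re (W (sqrt \<delta>))" and "F (W (sqrt \<delta>)) (sqrt \<delta>) = 0"
      using W sqrt_in[OF that] by auto
    moreover have "W (sqrt \<delta>) \<noteq> 0"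
      using Re by auto
    ultimately show ?thesis
      using root[of "sqrt \<delta>" "W (sqrt \<delta>)"] sqrt_in[OF that] that by (auto simp: \<omega>_def)
  qed
  moreover have "(\<lambda>\<delta>. \<omega> \<delta> - (of_real (c * \<delta> powr (1/2)) - \<i> * of_real (\<beta> / (2 * \<alpha>) * \<delta>)))
      \<in> O[at_right 0](\<lambda>\<delta>. of_real (\<delta> powr (3/2)))"
    unfolding \<omega>_def by (rule sqrt_rescaled_bigo[OF assms(1) \<open>0 < e\<close> W_approx])
  ultimately show ?thesis
    using \<open>0 < e\<close> by (intro exI[of _ "e\<^sup>2"] exI[of _ \<omega>]) auto
qed

section \<open>Monopolar resonances\<close>

lemma monopolar_resonance_ball:
  fixes v vr :: real and r :: "nat \<Rightarrow> real"
  assumes "0 < v" "0 < vr" "0 < r 1"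
  shows "\<exists>\<delta>0 > 0. \<exists>\<omega> :: real \<Rightarrow> complex.
           continuous_on {0<..<\<delta>0} \<omega> \<and>
           (\<forall>\<delta> \<in> {0<..<\<delta>0}. Re (\<omega> \<delta>) > 0 \<and> det (transmission_matrix 1 r v vr (\<omega> \<delta>) \<delta>) = 0) \<and>
           (\<lambda>\<delta>. \<omega> \<delta> - (of_real (sqrt 3 * vr / r 1 * \<delta> powr (1/2))
                          - \<i> * of_real (3 * vr / (2 * (v / vr) * r 1) * \<delta>)))
             \<in> O[at_right 0](\<lambda>\<delta>. of_real (\<delta> powr (3/2)))"
proof -
  define a where "a = r 1 / vr"
  define b where "b = r 1 / v"
  define c where "c = sqrt 3 * vr / r 1"
  have "0 < a" "0 < c"
    using assms by (simp_all add: a_def c_def)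
  have ac: "a\<^sup>2 / 3 * c\<^sup>2 = 1"
    using assms by (simp add: a_def c_def power_divide power_mult_distrib)
  have coeff: "b / (2 * (a\<^sup>2 / 3)) = 3 * vr / (2 * (v / vr) * r 1)"
    using assms by (simp add: a_def b_def field_simps power2_eq_square)
  have "\<exists>\<delta>0 > 0. \<exists>\<omega> :: real \<Rightarrow> complex.
           continuous_on {0<..<\<delta>0} \<omega> \<and>
           (\<forall>\<delta> \<in> {0<..<\<delta>0}. Re (\<omega> \<delta>) > 0 \<and> det (transmission_matrix 1 r v vr (\<omega> \<delta>) \<delta>) = 0) \<and>
           (\<lambda>\<delta>. \<omega> \<delta> - (of_real (c * \<delta> powr (1/2)) - \<i> * of_real (b / (2 * (a\<^sup>2 / 3)) * \<delta>)))
             \<in> O[at_right 0](\<lambda>\<delta>. of_real (\<delta> powr (3/2)))"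
  proof (rule resonance_from_reduced_equation[where F = "\<lambda>w \<epsilon>. reduced_det_ball a b w \<epsilon>"])
    show "uniform_bigo (ball (of_real c) (c / 2)) 2 (\<lambda>\<epsilon> w. reduced_det_ball a b w \<epsilon>
            - (of_real (a\<^sup>2 / 3) * w\<^sup>2 + \<i> * of_real \<epsilon> * of_real b * w - 1))"
    proof (rule uniform_bigo_reduced_det_ball[OF bounded_ball])
      show "0 \<notin> ball (complex_of_real c) (c / 2)"
        using norm_gt_of_mem_half_ball[OF \<open>0 < c\<close>, of 0] \<open>0 < c\<close> by auto
    qed (use \<open>0 < a\<close> in simp)
    show "det (transmission_matrix 1 r v vr (of_real \<epsilon> * w) (\<epsilon>\<^sup>2)) = 0"
      if "0 < \<epsilon>" "w \<noteq> 0" "reduced_det_ball a b w \<epsilon> = 0" for \<epsilon> w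
      using det_transmission_matrix_1[where r = r, OF assms that(1,2)] that(3)
      by (simp add: a_def b_def)
  qed (use \<open>0 < a\<close> \<open>0 < c\<close> ac reduced_det_ball_holomorphic reduced_det_ball_continuous in auto)
  then show ?thesis
    unfolding c_def coeff .
qed

lemma monopolar_resonance_shell:
  fixes v vr :: real and r :: "nat \<Rightarrow> real"
  assumes "0 < v" "0 < vr" "0 < r 2" "r 2 < r 1"
  shows "\<exists>\<delta>0 > 0. \<exists>\<omega> :: real \<Rightarrow> complex.
           continuous_on {0<..<\<delta>0} \<omega> \<and>
           (\<forall>\<delta> \<in> {0<..<\<delta>0}. Re (\<omega> \<delta>) > 0 \<and> det (transmission_matrix 2 r v vr (\<omega> \<delta>) \<delta>) = 0) \<and>
           (\<lambda>\<delta>. \<omega> \<delta> - (of_real (sqrt (3 * r 1) * vr / sqrt (r 1 ^ 3 - r 2 ^ 3) * \<delta> powr (1/2))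
                          - \<i> * of_real
                              (3 * r 1 ^ 2 * vr / (2 * (v / vr) * (r 1 ^ 3 - r 2 ^ 3)) * \<delta>)))
             \<in> O[at_right 0](\<lambda>\<delta>. of_real (\<delta> powr (3/2)))"
proof -
  define a1 where "a1 = r 1 / vr"
  define a2 where "a2 = r 2 / vr"
  define b1 where "b1 = r 1 / v"
  define b2 where "b2 = r 2 / v"
  define \<alpha> where "\<alpha> = (a1 ^ 3 - a2 ^ 3) / (3 * a1)"
  define c where "c = sqrt (3 * r 1) * vr / sqrt (r 1 ^ 3 - r 2 ^ 3)"
  have "0 < r 1" "0 < r 1 ^ 3 - r 2 ^ 3"
    using assms(3,4) power_strict_mono[of "r 2" "r 1" 3] by simp_all
  have pos: "0 < a1" "0 < a2" "0 < b2" "0 < c"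
    using assms \<open>0 < r 1\<close> \<open>0 < r 1 ^ 3 - r 2 ^ 3\<close> by (simp_all add: a1_def a2_def b2_def c_def)
  have \<alpha>_eq: "\<alpha> = (r 1 ^ 3 - r 2 ^ 3) / (3 * r 1 * vr\<^sup>2)"
    using assms(2)
        \<open>0 < r 1\<close> by (simp add: \<alpha>_def a1_def a2_def field_simps power2_eq_square power3_eq_cube)
  have "0 < \<alpha>" "\<alpha> * c\<^sup>2 = 1"
    using assms(2) \<open>0 < r 1\<close> \<open>0 < r 1 ^ 3 - r 2 ^ 3\<close>
    by (simp_all add: \<alpha>_eq c_def power_divide power_mult_distrib)
  have coeff: "b1 / (2 * \<alpha>) = 3 * r 1 ^ 2 * vr / (2 * (v / vr) * (r 1 ^ 3 - r 2 ^ 3))"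
    using assms(1,2) \<open>0 < r 1\<close> \<open>0 < r 1 ^ 3 - r 2 ^ 3\<close>
    by (simp add: \<alpha>_eq b1_def field_simps power2_eq_square)
  have "\<exists>\<delta>0 > 0. \<exists>\<omega> :: real \<Rightarrow> complex.
           continuous_on {0<..<\<delta>0} \<omega> \<and>
           (\<forall>\<delta> \<in> {0<..<\<delta>0}. Re (\<omega> \<delta>) > 0 \<and> det (transmission_matrix 2 r v vr (\<omega> \<delta>) \<delta>) = 0) \<and>
           (\<lambda>\<delta>. \<omega> \<delta> - (of_real (c * \<delta> powr (1/2)) - \<i> * of_real (b1 / (2 * \<alpha>) * \<delta>)))
             \<in> O[at_right 0](\<lambda>\<delta>. of_real (\<delta> powr (3/2)))"
  proof (rule resonance_from_reduced_equation
      [where F = "\<lambda>w \<epsilon>. reduced_det_shell a1 a2 b1 b2 (v / vr) w \<epsilon>"])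
    show "uniform_bigo (ball (of_real c) (c / 2)) 2
        (\<lambda>\<epsilon> w. reduced_det_shell a1 a2 b1 b2 (v / vr) w \<epsilon>
            - (of_real \<alpha> * w\<^sup>2 + \<i> * of_real \<epsilon> * of_real b1 * w - 1))"
      unfolding \<alpha>_def
    proof (rule uniform_bigo_reduced_det_shell[OF bounded_ball])
      show "0 \<notin> ball (complex_of_real c) (c / 2)"
        using norm_gt_of_mem_half_ball[OF \<open>0 < c\<close>, of 0] \<open>0 < c\<close> by auto
      show "c / 2 \<le> norm w" if "w \<in> ball (complex_of_real c) (c / 2)" for w
        using norm_gt_of_mem_half_ball[OF \<open>0 < c\<close> that] by simp
    qed (use pos in simp_all)
    show "det (transmission_matrix 2 r v vr (of_real \<epsilon> * w) (\<epsilon>\<^sup>2)) = 0"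
      if "0 < \<epsilon>" "w \<noteq> 0" "reduced_det_shell a1 a2 b1 b2 (v / vr) w \<epsilon> = 0" for \<epsilon> w
      using det_transmission_matrix_2[where r = r, OF assms(1-3) \<open>0 < r 1\<close> that(1,2)] that(3)
      by (simp add: a1_def a2_def b1_def b2_def)
  qed (use pos \<open>0 < \<alpha>\<close> \<open>\<alpha> * c\<^sup>2 = 1\<close> assms(1,2) reduced_det_shell_holomorphic
         reduced_det_shell_continuous in auto)
  then show ?thesis
    unfolding c_def coeff .
qed

theorem mainTheorem3:
  fixes v vr :: real and r :: "nat \<Rightarrow> real"
  assumes "v > 0" and "vr > 0"
  shows
   "(r 1 > 0 \<longrightarrow>
      (\<exists>\<delta>0 > 0. \<exists>\<omega> :: real \<Rightarrow> complex.
         continuous_on {0<..<\<delta>0} \<omega> \<and>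
         (\<forall>\<delta> \<in> {0<..<\<delta>0}. Re (\<omega> \<delta>) > 0 \<and> det (transmission_matrix 1 r v vr (\<omega> \<delta>) \<delta>) = 0) \<and>
         (\<lambda>\<delta>. \<omega> \<delta> - (of_real (sqrt 3 * vr / r 1 * \<delta> powr (1/2))
                        - \<i> * of_real (3 * vr / (2 * (v / vr) * r 1) * \<delta>)))
           \<in> O[at_right 0](\<lambda>\<delta>. of_real (\<delta> powr (3/2)))))
    \<and>
    (r 1 > r 2 \<and> r 2 > 0 \<longrightarrow>
      (\<exists>\<delta>0 > 0. \<exists>\<omega> :: real \<Rightarrow> complex.
         continuous_on {0<..<\<delta>0} \<omega> \<and>
         (\<forall>\<delta> \<in> {0<..<\<delta>0}. Re (\<omega> \<delta>) > 0 \<and> det (transmission_matrix 2 r v vr (\<omega> \<delta>) \<delta>) = 0) \<and>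
         (\<lambda>\<delta>. \<omega> \<delta> - (of_real (sqrt (3 * r 1) * vr / sqrt (r 1 ^ 3 - r 2 ^ 3) * \<delta> powr (1/2))
                        - \<i> * of_real (3 * r 1 ^ 2 * vr / (2 * (v / vr) * (r 1 ^ 3 - r 2 ^ 3)) * \<delta>)))
           \<in> O[at_right 0](\<lambda>\<delta>. of_real (\<delta> powr (3/2)))))"
  by (intro conjI impI monopolar_resonance_ball[OF assms] monopolar_resonance_shell[OF assms]) auto

end
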